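(* Consider a finite MDP with state space $\mathcal S$, action space $\mathcal A$, transition kernel $P$, deterministic reward function $r(s,a,s')$, discount $\gamma\in[0,1)$ and optimal Q-function $Q^*$. Let $\beta>0$. Let $(s_k,a_k,s_k')_{k\ge0}$ be i.i.d. triples where $s_k\sim p$ for a fixed state distribution $p$, $a_k\sim b(\cdot\mid s_k)$ for a fixed behavior policy $b$, and $s_k'\sim P(\cdot\mid s_k,a_k)$, and assume $d(s,a):=p(s)b(a\mid s)>0$ for all $(s,a)$. Let $Q^A_0,Q^B_0\in\mathbb R^{\mathcal S\times\mathcal A}$ be arbitrary and define (AGT2-QL) $$Q^A_{k+1}(s_k,a_k)=Q^A_k(s_k,a_k)+\alpha_k\Big(r(s_k,a_k,s_k')+\gamma\max_{a\in\mathcal A}Q^B_k(s_k',a)-Q^A_k(s_k,a_k)\Big),$$ $$Q^B_{k+1}(s_k,a_k)=Q^B_k(s_k,a_k)+\alpha_k\beta\big(Q^A_k(s_k,a_k)-Q^B_k(s_k,a_k)\big),$$ with all other entries of $Q^A_{k+1},Q^B_{k+1}$ equal to those of $Q^A_k,Q^B_k$. If the step sizes satisfy $0\le\alpha_k\le1$, $\sum_k\alpha_k=\infty$, $\sum_k\alpha_k^2<\infty$, then $Q^A_k\to Q^*$ and $Q^B_k\to Q^*$ with probability one.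
   Context: $Q^*$ is the unique solution of $Q^*(s,a)=\sum_{s'}P(s'\mid s,a)\big(r(s,a,s')+\gamma\max_{a'}Q^*(s',a')\big)$. There are no terminal states. *)

theory Defs
  imports "HOL-Probability.Probability"
begin

definition bellman_opt ::
  "('s::finite \<Rightarrow> 'a::finite \<Rightarrow> 's pmf) \<Rightarrow> ('s \<Rightarrow> 'a \<Rightarrow> 's \<Rightarrow> real) \<Rightarrow> real
   \<Rightarrow> ('s \<Rightarrow> 'a \<Rightarrow> real) \<Rightarrow> bool" where
  "bellman_opt P r g Q \<longleftrightarrow>
     (\<forall>s a. Q s a = (\<Sum>s'\<in>UNIV. pmf (P s a) s' * (r s a s' + g * (MAX a'\<in>UNIV. Q s' a'))))"

definition sample_pmf ::
  "'s pmf \<Rightarrow> ('s \<Rightarrow> 'a pmf) \<Rightarrow> ('s \<Rightarrow> 'a \<Rightarrow> 's pmf) \<Rightarrow> ('s \<times> 'a \<times> 's) pmf" where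
  "sample_pmf p b P = do { s \<leftarrow> p; a \<leftarrow> b s; s' \<leftarrow> P s a; return_pmf (s, a, s') }"

definition agt2_step ::
  "('s \<Rightarrow> 'a \<Rightarrow> 's \<Rightarrow> real) \<Rightarrow> real \<Rightarrow> real \<Rightarrow> real
   \<Rightarrow> ('s \<Rightarrow> 'a::finite \<Rightarrow> real) \<times> ('s \<Rightarrow> 'a \<Rightarrow> real) \<Rightarrow> 's \<times> 'a \<times> 's
   \<Rightarrow> ('s \<Rightarrow> 'a \<Rightarrow> real) \<times> ('s \<Rightarrow> 'a \<Rightarrow> real)" where
  "agt2_step r g be al QQ x =
     (case QQ of (QA, QB) \<Rightarrow> case x of (s, a, s') \<Rightarrow>
       ((\<lambda>t c. if t = s \<and> c = a
                then QA s a + al * (r s a s' + g * (MAX a'\<in>UNIV. QB s' a') - QA s a)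
                else QA t c),
        (\<lambda>t c. if t = s \<and> c = a
                then QB s a + al * be * (QA s a - QB s a)
                else QB t c)))"

primrec agt2_iter ::
  "('s \<Rightarrow> 'a \<Rightarrow> 's \<Rightarrow> real) \<Rightarrow> real \<Rightarrow> real \<Rightarrow> (nat \<Rightarrow> real)
   \<Rightarrow> ('s \<Rightarrow> 'a::finite \<Rightarrow> real) \<Rightarrow> ('s \<Rightarrow> 'a \<Rightarrow> real) \<Rightarrow> (nat \<Rightarrow> 's \<times> 'a \<times> 's)
   \<Rightarrow> nat \<Rightarrow> ('s \<Rightarrow> 'a \<Rightarrow> real) \<times> ('s \<Rightarrow> 'a \<Rightarrow> real)" where
  "agt2_iter r g be al QA0 QB0 xs 0 = (QA0, QB0)"
| "agt2_iter r g be al QA0 QB0 xs (Suc k) =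
     agt2_step r g be (al k) (agt2_iter r g be al QA0 QB0 xs k) (xs k)"

end

theory Submission
  imports Defs
begin

text \<open>The update of \<open>Q\<^sup>A\<close> is a stochastic approximation of the mean update
  \<open>Q\<^sup>A + d (T Q\<^sup>B - Q\<^sup>A)\<close> and that of \<open>Q\<^sup>B\<close> of \<open>Q\<^sup>B + \<beta> d (Q\<^sup>A - Q\<^sup>B)\<close>, where \<open>d(s,a)\<close> is the
  sampling frequency of \<open>(s,a)\<close> and \<open>T\<close> is the Bellman optimality operator, a \<open>\<gamma>\<close>-contraction
  in the sup norm with fixed point \<open>Q\<^sup>*\<close>. The difference between sampled and mean update is a
  bounded martingale difference (the iterates stay bounded), so because \<open>\<Sum> \<alpha>\<^sub>k\<^sup>2 < \<infinity>\<close> the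
  weighted noise series converge almost surely, by Kolmogorov's maximal inequality. Shifting the
  iterates by the tails of these series leaves the mean dynamics perturbed by a vanishing error.
  For those, \<open>max (\<parallel>Q\<^sup>A - Q\<^sup>*\<parallel> / \<rho>) \<parallel>Q\<^sup>B - Q\<^sup>*\<parallel>\<close> with \<open>\<gamma> < \<rho> < 1\<close> decreases by a factor
  \<open>1 - c \<alpha>\<^sub>k\<close> up to the error, and \<open>\<Sum> \<alpha>\<^sub>k = \<infinity>\<close> drives it to zero.\<close>

section \<open>Real sequences\<close>

lemma filterlim_at_top_sum_not_summable:
  fixes f :: "nat \<Rightarrow> real"
  assumes nonneg: "\<And>k. 0 \<le> f k" and not_summable: "\<not> summable f"
  shows "filterlim (\<lambda>n. \<Sum>k\<in>{K..<n}. f k) at_top sequentially"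
  unfolding filterlim_at_top
proof
  fix Z :: real
  have "\<exists>n. Z \<le> (\<Sum>k\<in>{K..<n}. f k)"
  proof (rule ccontr)
    assume small: "\<nexists>n. Z \<le> (\<Sum>k\<in>{K..<n}. f k)"
    have "(\<Sum>k<n. f k) \<le> (\<Sum>k<K. f k) + Z" for n
    proof -
      have "(\<Sum>k<n. f k) \<le> (\<Sum>k<max K n. f k)"
        by (intro sum_mono2) (auto intro: nonneg)
      also have "\<dots> = (\<Sum>k<K. f k) + (\<Sum>k\<in>{K..<max K n}. f k)"
        using sum.atLeastLessThan_concat[of 0 K "max K n" f] by (simp add: atLeast0LessThan)
      also have "\<dots> \<le> (\<Sum>k<K. f k) + Z"
        using small by (meson add_left_mono nle_le)
      finally show ?thesis .
    qed
    then have "summable f" by (intro summableI_nonneg_bounded[OF nonneg])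
    with not_summable show False by contradiction
  qed
  then obtain n where n: "Z \<le> (\<Sum>k\<in>{K..<n}. f k)" ..
  have "Z \<le> (\<Sum>k\<in>{K..<m}. f k)" if "n \<le> m" for m
  proof -
    have "(\<Sum>k\<in>{K..<n}. f k) \<le> (\<Sum>k\<in>{K..<m}. f k)"
      using that by (intro sum_mono2) (auto intro: nonneg)
    with n show ?thesis by linarith
  qed
  then show "\<forall>\<^sub>F m in sequentially. Z \<le> (\<Sum>k\<in>{K..<m}. f k)"
    unfolding eventually_sequentially by blast
qed

lemma contraction_exp_bound:
  fixes W al :: "nat \<Rightarrow> real"
  assumes nonneg: "\<And>k. 0 \<le> W k"
    and step: "\<And>k. K \<le> k \<Longrightarrow> W (Suc k) \<le> (1 - \<epsilon> * al k) * W k"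
  shows "W (K + i) \<le> W K * exp (- (\<epsilon> * (\<Sum>k\<in>{K..<K + i}. al k)))"
proof (induction i)
  case 0
  then show ?case by simp
next
  case (Suc i)
  have "W (K + Suc i) \<le> (1 - \<epsilon> * al (K + i)) * W (K + i)"
    using step[of "K + i"] by simp
  also have "\<dots> \<le> exp (- (\<epsilon> * al (K + i))) * W (K + i)"
    using exp_ge_add_one_self[of "- (\<epsilon> * al (K + i))"] nonneg by (intro mult_right_mono) auto
  also have "\<dots> \<le> exp (- (\<epsilon> * al (K + i))) * (W K * exp (- (\<epsilon> * (\<Sum>k\<in>{K..<K + i}. al k))))"
    by (intro mult_left_mono Suc.IH) simp
  also have "\<dots> = W K * exp (- (\<epsilon> * (\<Sum>k\<in>{K..<K + Suc i}. al k)))"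
    by (simp add: algebra_simps exp_add[symmetric])
  finally show ?case .
qed

lemma exp_neg_sum_LIMSEQ_zero:
  fixes f :: "nat \<Rightarrow> real"
  assumes "\<And>k. 0 \<le> f k" "\<not> summable f" "0 < \<epsilon>"
  shows "(\<lambda>m. exp (- (\<epsilon> * (\<Sum>k\<in>{K..<m}. f k)))) \<longlonglongrightarrow> 0"
proof -
  have "filterlim (\<lambda>m. \<epsilon> * (\<Sum>k\<in>{K..<m}. f k)) at_top sequentially"
    by (rule filterlim_tendsto_pos_mult_at_top[OF tendsto_const \<open>0 < \<epsilon>\<close>
          filterlim_at_top_sum_not_summable[OF assms(1,2)]])
  then have "filterlim (\<lambda>m. - (\<epsilon> * (\<Sum>k\<in>{K..<m}. f k))) at_bot sequentially"
    by (simp add: filterlim_uminus_at_bot)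
  then show ?thesis by (rule filterlim_compose[OF exp_at_bot])
qed

lemma perturbed_contraction_LIMSEQ_zero:
  fixes V E al :: "nat \<Rightarrow> real"
  assumes V_nonneg: "\<And>k. 0 \<le> V k" and eps: "0 < \<epsilon>"
    and step: "\<And>k. K \<le> k \<Longrightarrow> V (Suc k) \<le> (1 - \<epsilon> * al k) * V k + al k * E k"
    and al_nonneg: "\<And>k. 0 \<le> al k" and al_small: "\<And>k. K \<le> k \<Longrightarrow> \<epsilon> * al k \<le> 1"
    and E: "E \<longlonglongrightarrow> 0" and not_summable: "\<not> summable al"
  shows "V \<longlonglongrightarrow> 0"
proof (rule LIMSEQ_I)
  fix r :: real assume "0 < r"
  define \<eta> where "\<eta> = r / 2"
  have "0 < \<eta>" using \<open>0 < r\<close> by (simp add: \<eta>_def)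
  have "\<forall>\<^sub>F k in sequentially. E k < \<epsilon> * \<eta>"
    using order_tendstoD(2)[OF E] eps \<open>0 < \<eta>\<close> by simp
  then obtain K1 where K1: "\<And>k. K1 \<le> k \<Longrightarrow> E k < \<epsilon> * \<eta>"
    by (auto simp: eventually_sequentially)
  define K2 where "K2 = max K K1"
  define W where "W k = max (V k - \<eta>) 0" for k
  have W_step: "W (Suc k) \<le> (1 - \<epsilon> * al k) * W k" if "K2 \<le> k" for k
  proof -
    have rate: "0 \<le> 1 - \<epsilon> * al k" using al_small[of k] that by (simp add: K2_def)
    have "al k * E k \<le> al k * (\<epsilon> * \<eta>)"
      using K1[of k] that al_nonneg[of k] by (intro mult_left_mono) (auto simp: K2_def)
    moreover have "V (Suc k) \<le> (1 - \<epsilon> * al k) * V k + al k * E k"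
      using step[of k] that by (simp add: K2_def)
    moreover have "(1 - \<epsilon> * al k) * (V k - \<eta>) = (1 - \<epsilon> * al k) * V k + al k * (\<epsilon> * \<eta>) - \<eta>"
      by (simp add: algebra_simps)
    ultimately have "V (Suc k) - \<eta> \<le> (1 - \<epsilon> * al k) * (V k - \<eta>)"
      by linarith
    also have "\<dots> \<le> (1 - \<epsilon> * al k) * W k"
      using rate by (intro mult_left_mono) (auto simp: W_def)
    finally show ?thesis using rate by (simp add: W_def)
  qed
  have "(\<lambda>m. W K2 * exp (- (\<epsilon> * (\<Sum>k\<in>{K2..<m}. al k)))) \<longlonglongrightarrow> 0"
    by (rule tendsto_mult_right_zero[OF exp_neg_sum_LIMSEQ_zero[OF al_nonneg not_summable eps]])
  then have "\<forall>\<^sub>F m in sequentially. W K2 * exp (- (\<epsilon> * (\<Sum>k\<in>{K2..<m}. al k))) < \<eta>"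
    using order_tendstoD(2) \<open>0 < \<eta>\<close> by blast
  then obtain N where N: "\<And>m. N \<le> m \<Longrightarrow> W K2 * exp (- (\<epsilon> * (\<Sum>k\<in>{K2..<m}. al k))) < \<eta>"
    by (auto simp: eventually_sequentially)
  show "\<exists>N. \<forall>m\<ge>N. norm (V m - 0) < r"
  proof (intro exI allI impI)
    fix m assume m: "max N K2 \<le> m"
    have "W m = W (K2 + (m - K2))" using m by simp
    also have "\<dots> \<le> W K2 * exp (- (\<epsilon> * (\<Sum>k\<in>{K2..<m}. al k)))"
      using contraction_exp_bound[of W K2 \<epsilon> al "m - K2", OF _ W_step] m by (simp add: W_def)
    also have "\<dots> < \<eta>" using N m by simp
    finally have "V m - \<eta> < \<eta>" by (simp add: W_def)
    then show "norm (V m - 0) < r" using V_nonneg[of m] by (simp add: \<eta>_def)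
  qed
qed

lemma square_summable_LIMSEQ_zero:
  fixes f :: "nat \<Rightarrow> real"
  assumes "summable (\<lambda>k. (f k)\<^sup>2)"
  shows "f \<longlonglongrightarrow> 0"
proof -
  have "(\<lambda>k. sqrt ((f k)\<^sup>2)) \<longlonglongrightarrow> sqrt 0"
    by (intro tendsto_real_sqrt summable_LIMSEQ_zero assms)
  then show ?thesis by (simp add: tendsto_rabs_zero_iff)
qed

lemma square_summable_eventually_le:
  fixes f :: "nat \<Rightarrow> real"
  assumes "summable (\<lambda>k. (f k)\<^sup>2)" "0 < c"
  obtains K where "\<And>k. K \<le> k \<Longrightarrow> f k * c \<le> 1"
proof -
  have "\<forall>\<^sub>F k in sequentially. f k < 1 / c"
    using order_tendstoD(2)[OF square_summable_LIMSEQ_zero[OF assms(1)]] assms(2) by simp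
  then obtain K where K: "\<forall>k\<ge>K. f k < 1 / c" unfolding eventually_sequentially by blast
  show ?thesis
  proof (rule that)
    fix k assume "K \<le> k"
    with K have "f k < 1 / c" by blast
    then show "f k * c \<le> 1" using assms(2) by (simp add: pos_less_divide_eq)
  qed
qed

lemma sum_atLeastLessThan_le_suminf_shift:
  fixes f :: "nat \<Rightarrow> real"
  assumes "summable f" "\<And>k. 0 \<le> f k"
  shows "(\<Sum>k\<in>{n..<m}. f k) \<le> (\<Sum>k. f (k + n))"
proof -
  have "(\<Sum>k\<in>{n..<m}. f k) = (\<Sum>k\<in>{0..<m - n}. f (k + n))"
    by (rule sum.reindex_bij_witness[of _ "\<lambda>k. k + n" "\<lambda>k. k - n"]) auto
  also have "\<dots> \<le> (\<Sum>k. f (k + n))"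
    using assms summable_ignore_initial_segment by (intro sum_le_suminf) auto
  finally show ?thesis .
qed

lemma convergent_sum_if_block_sums_small:
  fixes f :: "nat \<Rightarrow> real"
  assumes small: "\<And>e. 0 < e \<Longrightarrow> \<exists>n. \<forall>j\<ge>n. \<bar>\<Sum>k\<in>{n..<j}. f k\<bar> < e"
  shows "convergent (\<lambda>m. \<Sum>k<m. f k)"
proof -
  have "Cauchy (\<lambda>m. \<Sum>k<m. f k)"
    unfolding Cauchy_iff
  proof (intro allI impI)
    fix e :: real assume "0 < e"
    then obtain n where n: "\<And>j. n \<le> j \<Longrightarrow> \<bar>\<Sum>k\<in>{n..<j}. f k\<bar> < e / 2"
      using small[of "e / 2"] by auto
    have split: "(\<Sum>k<j. f k) = (\<Sum>k<n. f k) + (\<Sum>k\<in>{n..<j}. f k)" if "n \<le> j" for j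
      using sum.atLeastLessThan_concat[of 0 n j f] that by (simp add: atLeast0LessThan)
    show "\<exists>N. \<forall>m\<ge>N. \<forall>m'\<ge>N. norm ((\<Sum>k<m. f k) - (\<Sum>k<m'. f k)) < e"
    proof (intro exI allI impI)
      fix m m' assume "n \<le> m" "n \<le> m'"
      then have "norm ((\<Sum>k<m. f k) - (\<Sum>k<m'. f k)) = \<bar>(\<Sum>k\<in>{n..<m}. f k) - (\<Sum>k\<in>{n..<m'}. f k)\<bar>"
        using split[of m] split[of m'] by simp
      also have "\<dots> < e" using n[OF \<open>n \<le> m\<close>] n[OF \<open>n \<le> m'\<close>] by linarith
      finally show "norm ((\<Sum>k<m. f k) - (\<Sum>k<m'. f k)) < e" .
    qed
  qed
  then show ?thesis by (rule Cauchy_convergent)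
qed

section \<open>Coupled contraction with vanishing perturbation\<close>

definition sup_dist :: "('s::finite \<Rightarrow> 'a::finite \<Rightarrow> real) \<Rightarrow> ('s \<Rightarrow> 'a \<Rightarrow> real) \<Rightarrow> real" where
  "sup_dist Q Q' = Max (range (\<lambda>(s, a). \<bar>Q s a - Q' s a\<bar>))"

lemma sup_dist_ge: "\<bar>Q s a - Q' s a\<bar> \<le> sup_dist Q Q'"
  unfolding sup_dist_def by (rule Max_ge) (auto intro: image_eqI[of _ _ "(s, a)"])

lemma sup_dist_le: "(\<And>s a. \<bar>Q s a - Q' s a\<bar> \<le> B) \<Longrightarrow> sup_dist Q Q' \<le> B"
  unfolding sup_dist_def by (subst Max_le_iff) auto

lemma sup_dist_nonneg: "0 \<le> sup_dist Q Q'"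
  using sup_dist_ge[of Q undefined undefined Q'] by linarith

lemma abs_convex_comb_le:
  fixes \<alpha> u v :: real
  assumes "0 \<le> \<alpha>" "\<alpha> \<le> 1"
  shows "\<bar>(1 - \<alpha>) * u + \<alpha> * v\<bar> \<le> (1 - \<alpha>) * \<bar>u\<bar> + \<alpha> * \<bar>v\<bar>"
  using abs_triangle_ineq[of "(1 - \<alpha>) * u" "\<alpha> * v"] assms by (simp add: abs_mult)

lemma scaled_contraction_step:
  fixes a amin x y V g \<rho> e t :: real
  assumes "0 \<le> amin" "amin \<le> a" "a \<le> 1" "0 \<le> x" "x \<le> \<rho> * V" "0 \<le> y" "y \<le> V"
    "0 \<le> g" "g \<le> \<rho> * \<rho>" "0 < \<rho>" "\<rho> < 1" "0 \<le> e" "g \<le> 1"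
    and t: "t \<le> (1 - a) * x + a * (g * (y + e) + e)"
  shows "t / \<rho> \<le> (1 - amin * (1 - \<rho>)) * V + a * (2 * e / \<rho>)"
proof -
  have "0 \<le> V" using assms by linarith
  have "x / \<rho> \<le> V" using assms by (simp add: field_simps)
  then have x: "(1 - a) * x / \<rho> \<le> (1 - a) * V"
    using assms mult_left_mono[of "x / \<rho>" V "1 - a"] by simp
  have "g * y \<le> (\<rho> * \<rho>) * V" using assms by (intro mult_mono) auto
  then have "g * y / \<rho> \<le> \<rho> * V" using assms by (simp add: field_simps)
  then have y: "a * (g * y) / \<rho> \<le> a * (\<rho> * V)"
    using mult_left_mono[of "g * y / \<rho>" "\<rho> * V" a] assms by simp
  have "g * e + e \<le> 2 * e" using assms mult_right_mono[of g 1 e] by simp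
  then have "(g * e + e) / \<rho> \<le> 2 * e / \<rho>" using assms by (simp add: divide_right_mono)
  then have e: "a * (g * e + e) / \<rho> \<le> a * (2 * e / \<rho>)"
    using assms by (metis mult_left_mono order_trans times_divide_eq_right)
  have "amin * (1 - \<rho>) * V \<le> a * (1 - \<rho>) * V"
    using assms \<open>0 \<le> V\<close> by (intro mult_right_mono) auto
  moreover have "t / \<rho> \<le> (1 - a) * x / \<rho> + a * (g * y) / \<rho> + a * (g * e + e) / \<rho>"
    using t assms by (simp add: divide_right_mono add_divide_distrib[symmetric] algebra_simps)
  ultimately show ?thesis using x y e by (simp add: algebra_simps)
qed

lemma contraction_step:
  fixes b bmin x y V \<rho> e t :: real
  assumes "0 \<le> bmin" "bmin \<le> b" "b \<le> 1" "0 \<le> x" "x \<le> \<rho> * V" "0 \<le> y" "y \<le> V"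
    "0 < \<rho>" "\<rho> < 1" and t: "t \<le> (1 - b) * y + b * (x + e)"
  shows "t \<le> (1 - bmin * (1 - \<rho>)) * V + b * e"
proof -
  have "0 \<le> V" using assms by linarith
  have "(1 - b) * y \<le> (1 - b) * V" "b * x \<le> b * (\<rho> * V)"
    using assms by (auto intro: mult_left_mono)
  moreover have "bmin * (1 - \<rho>) * V \<le> b * (1 - \<rho>) * V"
    using assms \<open>0 \<le> V\<close> by (intro mult_right_mono) auto
  ultimately show ?thesis using t by (simp add: algebra_simps)
qed

locale coupled_contraction =
  fixes xA xB yB etaA etaB :: "nat \<Rightarrow> 's::finite \<Rightarrow> 'a::finite \<Rightarrow> real" and e :: "nat \<Rightarrow> real"
    and Qs d :: "'s \<Rightarrow> 'a \<Rightarrow> real" and T :: "('s \<Rightarrow> 'a \<Rightarrow> real) \<Rightarrow> 's \<Rightarrow> 'a \<Rightarrow> real"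
    and al :: "nat \<Rightarrow> real" and g be :: real and K :: nat
  assumes g_nonneg: "0 \<le> g" and g_less_1: "g < 1" and be_pos: "0 < be"
    and d_pos: "\<And>s a. 0 < d s a" and d_le_1: "\<And>s a. d s a \<le> 1"
    and al_nonneg: "\<And>k. 0 \<le> al k" and al_small: "\<And>k. K \<le> k \<Longrightarrow> al k \<le> 1 \<and> al k * be \<le> 1"
    and al_not_summable: "\<not> summable al"
    and T_contraction:
      "\<And>Q Q' B s a. (\<And>s' a'. \<bar>Q s' a' - Q' s' a'\<bar> \<le> B) \<Longrightarrow> \<bar>T Q s a - T Q' s a\<bar> \<le> g * B"
    and T_fixpoint: "T Qs = Qs"
    and rec_A: "\<And>k s a. xA (Suc k) s a = xA k s a + al k * d s a * (T (yB k) s a - xA k s a + etaA k s a)"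
    and rec_B: "\<And>k s a. xB (Suc k) s a = xB k s a + al k * be * d s a * (xA k s a - xB k s a + etaB k s a)"
    and yB_close: "\<And>k s a. \<bar>yB k s a - xB k s a\<bar> \<le> e k"
    and eta_small: "\<And>k s a. \<bar>etaA k s a\<bar> \<le> e k \<and> \<bar>etaB k s a\<bar> \<le> e k"
    and e_LIMSEQ: "e \<longlonglongrightarrow> 0"
begin

text \<open>Weighting the error of \<open>xA\<close> by \<open>1 / rho\<close> with \<open>g \<le> rho\<^sup>2\<close> and \<open>rho < 1\<close> makes both
  updates contract \<open>lyap\<close>: the \<open>A\<close>-update sees the \<open>B\<close>-error only through the factor \<open>g\<close>, the
  \<open>B\<close>-update sees the \<open>A\<close>-error scaled down by \<open>rho\<close>.\<close>

definition rho :: real where "rho = (1 + g) / 2"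

definition lyap :: "nat \<Rightarrow> real" where
  "lyap k = max (sup_dist (xA k) Qs / rho) (sup_dist (xB k) Qs)"

definition dmin :: real where "dmin = Min (range (\<lambda>(s, a). d s a))"

definition rate :: real where "rate = dmin * min 1 be * (1 - rho)"

definition slack :: "nat \<Rightarrow> real" where "slack k = (2 / rho + be) * e k"

lemma rho_pos: "0 < rho" and rho_less_1: "rho < 1" and g_le_rho_square: "g \<le> rho * rho"
proof -
  show "0 < rho" "rho < 1" using g_nonneg g_less_1 by (auto simp: rho_def)
  have "0 \<le> ((1 - g) / 2)\<^sup>2" by simp
  then show "g \<le> rho * rho" unfolding rho_def by (simp add: power2_eq_square field_simps)
qed

lemma err_A_le_lyap: "\<bar>xA k s a - Qs s a\<bar> \<le> rho * lyap k"
proof -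
  have "sup_dist (xA k) Qs / rho \<le> lyap k" by (simp add: lyap_def)
  then have "sup_dist (xA k) Qs \<le> rho * lyap k" using rho_pos by (simp add: field_simps)
  then show ?thesis using sup_dist_ge[of "xA k" s a Qs] by linarith
qed

lemma err_B_le_lyap: "\<bar>xB k s a - Qs s a\<bar> \<le> lyap k"
  using sup_dist_ge[of "xB k" s a Qs] by (simp add: lyap_def le_max_iff_disj)

lemma lyap_nonneg: "0 \<le> lyap k"
  using err_B_le_lyap[of k undefined undefined] by linarith

lemma e_nonneg: "0 \<le> e k"
  using eta_small[of k undefined undefined] by linarith

lemma dmin_pos: "0 < dmin" and dmin_le: "dmin \<le> d s a"
proof -
  show "0 < dmin" unfolding dmin_def by (subst Min_gr_iff) (auto intro: d_pos)
  show "dmin \<le> d s a" unfolding dmin_def by (rule Min_le) (auto intro: image_eqI[of _ _ "(s, a)"])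
qed

lemma rate_pos: "0 < rate"
  unfolding rate_def using dmin_pos be_pos rho_less_1 by auto

lemma rate_le_1: "rate \<le> 1"
proof -
  have "dmin \<le> 1" using dmin_le d_le_1 order_trans by blast
  moreover have "min 1 be * (1 - rho) \<le> 1 * 1"
    using rho_pos rho_less_1 be_pos by (intro mult_mono) auto
  ultimately have "dmin * (min 1 be * (1 - rho)) \<le> 1 * 1"
    using dmin_pos rho_less_1 be_pos by (intro mult_mono) auto
  then show ?thesis by (simp add: rate_def mult.assoc)
qed

lemma err_A_Suc_le:
  assumes "K \<le> k"
  shows "\<bar>xA (Suc k) s a - Qs s a\<bar> / rho \<le> (1 - rate * al k) * lyap k + al k * slack k"
proof -
  define \<alpha> where "\<alpha> = al k * d s a"
  define \<alpha>min where "\<alpha>min = al k * (dmin * min 1 be)"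
  have "0 \<le> \<alpha>" "\<alpha> \<le> al k" "al k \<le> 1"
    using al_nonneg[of k] d_pos[of s a] d_le_1[of s a] al_small[OF assms]
    by (auto simp: \<alpha>_def mult_left_le)
  have "0 \<le> \<alpha>min" using al_nonneg[of k] dmin_pos be_pos by (simp add: \<alpha>min_def)
  have "dmin * min 1 be \<le> d s a * 1" using dmin_le[of s a] dmin_pos be_pos by (intro mult_mono) auto
  then have "\<alpha>min \<le> \<alpha>" using al_nonneg[of k] by (simp add: \<alpha>_def \<alpha>min_def mult_left_mono)
  have "\<bar>T (yB k) s a - T Qs s a\<bar> \<le> g * (sup_dist (xB k) Qs + e k)"
  proof (rule T_contraction)
    fix s' a'
    show "\<bar>yB k s' a' - Qs s' a'\<bar> \<le> sup_dist (xB k) Qs + e k"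
      using sup_dist_ge[of "xB k" s' a' Qs] yB_close[of k s' a'] by linarith
  qed
  then have noise: "\<bar>(T (yB k) s a - T Qs s a) + etaA k s a\<bar> \<le> g * (sup_dist (xB k) Qs + e k) + e k"
    using eta_small[of k s a] by linarith
  have "xA (Suc k) s a - Qs s a = (1 - \<alpha>) * (xA k s a - Qs s a) + \<alpha> * ((T (yB k) s a - T Qs s a) + etaA k s a)"
    using rec_A[of k s a] T_fixpoint by (simp add: \<alpha>_def algebra_simps)
  also have "\<bar>\<dots>\<bar> \<le> (1 - \<alpha>) * \<bar>xA k s a - Qs s a\<bar> + \<alpha> * \<bar>(T (yB k) s a - T Qs s a) + etaA k s a\<bar>"
    using \<open>0 \<le> \<alpha>\<close> \<open>\<alpha> \<le> al k\<close> \<open>al k \<le> 1\<close> by (intro abs_convex_comb_le) auto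
  also have "\<dots> \<le> (1 - \<alpha>) * \<bar>xA k s a - Qs s a\<bar> + \<alpha> * (g * (sup_dist (xB k) Qs + e k) + e k)"
    by (intro add_left_mono mult_left_mono noise \<open>0 \<le> \<alpha>\<close>)
  finally have "\<bar>xA (Suc k) s a - Qs s a\<bar> / rho
      \<le> (1 - \<alpha>min * (1 - rho)) * lyap k + \<alpha> * (2 * e k / rho)"
    using \<open>\<alpha> \<le> al k\<close> \<open>al k \<le> 1\<close> g_less_1
    by (intro scaled_contraction_step[OF \<open>0 \<le> \<alpha>min\<close> \<open>\<alpha>min \<le> \<alpha>\<close> _ abs_ge_zero err_A_le_lyap
          sup_dist_nonneg sup_dist_le[OF err_B_le_lyap] g_nonneg g_le_rho_square rho_pos rho_less_1
          e_nonneg]) auto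
  also have "\<dots> \<le> (1 - rate * al k) * lyap k + al k * slack k"
  proof -
    have "\<alpha> * (2 * e k / rho) \<le> al k * (2 * e k / rho)"
      using \<open>\<alpha> \<le> al k\<close> e_nonneg[of k] rho_pos by (intro mult_right_mono) auto
    also have "\<dots> \<le> al k * slack k"
      using al_nonneg[of k] e_nonneg[of k] be_pos
      by (intro mult_left_mono) (auto simp: slack_def algebra_simps)
    finally show ?thesis by (simp add: \<alpha>min_def rate_def algebra_simps)
  qed
  finally show ?thesis .
qed

lemma err_B_Suc_le:
  assumes "K \<le> k"
  shows "\<bar>xB (Suc k) s a - Qs s a\<bar> \<le> (1 - rate * al k) * lyap k + al k * slack k"
proof -
  define \<beta> where "\<beta> = al k * be * d s a"
  define \<beta>min where "\<beta>min = al k * (dmin * min 1 be)"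
  have "0 \<le> \<beta>" "\<beta> \<le> al k * be" "al k * be \<le> 1"
    using al_nonneg[of k] d_pos[of s a] d_le_1[of s a] be_pos al_small[OF assms]
    by (auto simp: \<beta>_def mult_left_le)
  have "0 \<le> \<beta>min" using al_nonneg[of k] dmin_pos be_pos by (simp add: \<beta>min_def)
  have "dmin * min 1 be \<le> d s a * be" using dmin_le[of s a] dmin_pos be_pos by (intro mult_mono) auto
  from mult_left_mono[OF this al_nonneg[of k]] have "\<beta>min \<le> \<beta>"
    by (simp add: \<beta>_def \<beta>min_def mult_ac)
  have "xB (Suc k) s a - Qs s a = (1 - \<beta>) * (xB k s a - Qs s a) + \<beta> * ((xA k s a - Qs s a) + etaB k s a)"
    using rec_B[of k s a] by (simp add: \<beta>_def algebra_simps)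
  also have "\<bar>\<dots>\<bar> \<le> (1 - \<beta>) * \<bar>xB k s a - Qs s a\<bar> + \<beta> * \<bar>(xA k s a - Qs s a) + etaB k s a\<bar>"
    using \<open>0 \<le> \<beta>\<close> \<open>\<beta> \<le> al k * be\<close> \<open>al k * be \<le> 1\<close> by (intro abs_convex_comb_le) auto
  also have "\<dots> \<le> (1 - \<beta>) * \<bar>xB k s a - Qs s a\<bar> + \<beta> * (\<bar>xA k s a - Qs s a\<bar> + e k)"
    using eta_small[of k s a] by (intro add_left_mono mult_left_mono \<open>0 \<le> \<beta>\<close>) linarith
  finally have "\<bar>xB (Suc k) s a - Qs s a\<bar> \<le> (1 - \<beta>min * (1 - rho)) * lyap k + \<beta> * e k"
    using \<open>\<beta> \<le> al k * be\<close> \<open>al k * be \<le> 1\<close>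
    by (intro contraction_step[OF \<open>0 \<le> \<beta>min\<close> \<open>\<beta>min \<le> \<beta>\<close> _ abs_ge_zero err_A_le_lyap
          abs_ge_zero err_B_le_lyap rho_pos rho_less_1]) auto
  also have "\<dots> \<le> (1 - rate * al k) * lyap k + al k * slack k"
  proof -
    have "\<beta> * e k \<le> (al k * be) * e k"
      using \<open>\<beta> \<le> al k * be\<close> e_nonneg[of k] by (intro mult_right_mono) auto
    also have "\<dots> \<le> al k * slack k"
      using al_nonneg[of k] e_nonneg[of k] rho_pos
      by (simp add: slack_def mult.assoc mult_left_mono distrib_right)
    finally show ?thesis by (simp add: \<beta>min_def rate_def algebra_simps)
  qed
  finally show ?thesis .
qed

lemma lyap_Suc_le: "K \<le> k \<Longrightarrow> lyap (Suc k) \<le> (1 - rate * al k) * lyap k + al k * slack k"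
proof -
  assume "K \<le> k"
  have "sup_dist (xA (Suc k)) Qs \<le> rho * ((1 - rate * al k) * lyap k + al k * slack k)"
    using err_A_Suc_le[OF \<open>K \<le> k\<close>] rho_pos by (intro sup_dist_le) (simp add: field_simps)
  then have "sup_dist (xA (Suc k)) Qs / rho \<le> (1 - rate * al k) * lyap k + al k * slack k"
    using rho_pos by (simp add: field_simps)
  moreover have "sup_dist (xB (Suc k)) Qs \<le> (1 - rate * al k) * lyap k + al k * slack k"
    using err_B_Suc_le[OF \<open>K \<le> k\<close>] by (rule sup_dist_le)
  ultimately show ?thesis by (simp add: lyap_def)
qed

lemma lyap_LIMSEQ_zero: "lyap \<longlonglongrightarrow> 0"
proof (rule perturbed_contraction_LIMSEQ_zero[OF lyap_nonneg rate_pos lyap_Suc_le al_nonneg _ _ al_not_summable])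
  show "rate * al k \<le> 1" if "K \<le> k" for k
    using al_small[OF that] rate_le_1 rate_pos al_nonneg[of k] by (intro mult_le_one) auto
  have "(\<lambda>k. (2 / rho + be) * e k) \<longlonglongrightarrow> (2 / rho + be) * 0"
    by (intro tendsto_mult tendsto_const e_LIMSEQ)
  then show "slack \<longlonglongrightarrow> 0" by (simp add: slack_def[abs_def])
qed

theorem LIMSEQ_fixpoint: "(\<lambda>k. xA k s a) \<longlonglongrightarrow> Qs s a \<and> (\<lambda>k. xB k s a) \<longlonglongrightarrow> Qs s a"
proof
  have "(\<lambda>k. rho * lyap k) \<longlonglongrightarrow> 0"
    using tendsto_mult_right_zero[OF lyap_LIMSEQ_zero] .
  then have "(\<lambda>k. xA k s a - Qs s a) \<longlonglongrightarrow> 0"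
    by (rule Lim_null_comparison[OF always_eventually, rotated]) (simp add: err_A_le_lyap)
  then show "(\<lambda>k. xA k s a) \<longlonglongrightarrow> Qs s a" by (simp add: LIM_zero_iff)
  have "(\<lambda>k. xB k s a - Qs s a) \<longlonglongrightarrow> 0"
    by (rule Lim_null_comparison[OF always_eventually lyap_LIMSEQ_zero]) (simp add: err_B_le_lyap)
  then show "(\<lambda>k. xB k s a) \<longlonglongrightarrow> Qs s a" by (simp add: LIM_zero_iff)
qed

end


definition series_tail :: "(nat \<Rightarrow> real) \<Rightarrow> nat \<Rightarrow> real" where
  "series_tail x k = lim (\<lambda>n. \<Sum>i<n. x i) - (\<Sum>i<k. x i)"

lemma series_tail_LIMSEQ_zero:
  assumes "convergent (\<lambda>n. \<Sum>i<n. x i)"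
  shows "series_tail x \<longlonglongrightarrow> 0"
proof -
  have "(\<lambda>k. lim (\<lambda>n. \<Sum>i<n. x i) - (\<Sum>i<k. x i)) \<longlonglongrightarrow> lim (\<lambda>n. \<Sum>i<n. x i) - lim (\<lambda>n. \<Sum>i<n. x i)"
    using assms by (intro tendsto_diff tendsto_const) (simp add: convergent_LIMSEQ_iff)
  then show ?thesis by (simp add: series_tail_def[abs_def])
qed

lemma series_tail_Suc: "series_tail x k = x k + series_tail x (Suc k)"
  by (simp add: series_tail_def)

text \<open>Shifting the iterates by the tails of the noise series turns summable noise into a
  vanishing perturbation of the deterministic coupled iteration.\<close>

theorem noisy_coupled_iteration_LIMSEQ:
  fixes QA QB wA wB :: "nat \<Rightarrow> 's::finite \<Rightarrow> 'a::finite \<Rightarrow> real" and Qs d :: "'s \<Rightarrow> 'a \<Rightarrow> real"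
    and T :: "('s \<Rightarrow> 'a \<Rightarrow> real) \<Rightarrow> 's \<Rightarrow> 'a \<Rightarrow> real" and al :: "nat \<Rightarrow> real" and g be :: real
  assumes "0 \<le> g" "g < 1" "0 < be" "\<And>s a. 0 < d s a" "\<And>s a. d s a \<le> 1"
    "\<And>k. 0 \<le> al k" "\<And>k. K \<le> k \<Longrightarrow> al k \<le> 1 \<and> al k * be \<le> 1" "\<not> summable al"
    "\<And>Q Q' B s a. (\<And>s' a'. \<bar>Q s' a' - Q' s' a'\<bar> \<le> B) \<Longrightarrow> \<bar>T Q s a - T Q' s a\<bar> \<le> g * B"
    "T Qs = Qs"
    and rec_A: "\<And>k s a. QA (Suc k) s a = QA k s a + al k * d s a * (T (QB k) s a - QA k s a) + al k * wA k s a"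
    and rec_B: "\<And>k s a. QB (Suc k) s a = QB k s a + al k * be * d s a * (QA k s a - QB k s a) + al k * wB k s a"
    and noise_A: "\<And>s a. convergent (\<lambda>n. \<Sum>k<n. al k * wA k s a)"
    and noise_B: "\<And>s a. convergent (\<lambda>n. \<Sum>k<n. al k * wB k s a)"
  shows "(\<lambda>k. QA k s a) \<longlonglongrightarrow> Qs s a \<and> (\<lambda>k. QB k s a) \<longlonglongrightarrow> Qs s a"
proof -
  define uA where "uA k s a = series_tail (\<lambda>j. al j * wA j s a) k" for k s a
  define uB where "uB k s a = series_tail (\<lambda>j. al j * wB j s a) k" for k s a
  define e where "e k = (\<Sum>p\<in>UNIV. \<bar>uA k (fst p) (snd p)\<bar> + \<bar>uB k (fst p) (snd p)\<bar>)" for k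
  have uA: "(\<lambda>k. uA k s a) \<longlonglongrightarrow> 0" and uB: "(\<lambda>k. uB k s a) \<longlonglongrightarrow> 0" for s a
    using series_tail_LIMSEQ_zero[OF noise_A] series_tail_LIMSEQ_zero[OF noise_B]
    by (simp_all add: uA_def uB_def)
  have u_le_e: "\<bar>uA k s a\<bar> + \<bar>uB k s a\<bar> \<le> e k" for k s a
    using member_le_sum[of "(s, a)" UNIV "\<lambda>p. \<bar>uA k (fst p) (snd p)\<bar> + \<bar>uB k (fst p) (snd p)\<bar>"]
    by (simp add: e_def)
  have "e \<longlonglongrightarrow> (\<Sum>p\<in>(UNIV :: ('s \<times> 'a) set). 0 + 0)"
    unfolding e_def[abs_def] by (intro tendsto_sum tendsto_add tendsto_rabs_zero uA uB)
  then have e: "e \<longlonglongrightarrow> 0" by simp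
  have rec_A': "QA (Suc k) s a + uA (Suc k) s a = QA k s a + uA k s a
      + al k * d s a * (T (QB k) s a - (QA k s a + uA k s a) + uA k s a)" for k s a
    using rec_A[of k s a] series_tail_Suc[of "\<lambda>j. al j * wA j s a" k] by (simp add: uA_def algebra_simps)
  have rec_B': "QB (Suc k) s a + uB (Suc k) s a = QB k s a + uB k s a
      + al k * be * d s a * ((QA k s a + uA k s a) - (QB k s a + uB k s a) + (uB k s a - uA k s a))" for k s a
    using rec_B[of k s a] series_tail_Suc[of "\<lambda>j. al j * wB j s a" k] by (simp add: uB_def algebra_simps)
  have close: "\<bar>QB k s a - (QB k s a + uB k s a)\<bar> \<le> e k" for k s a
    using u_le_e[of k s a] by simp
  have small: "\<bar>uA k s a\<bar> \<le> e k \<and> \<bar>uB k s a - uA k s a\<bar> \<le> e k" for k s a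
    using u_le_e[of k s a] by linarith
  interpret coupled_contraction "\<lambda>k s a. QA k s a + uA k s a" "\<lambda>k s a. QB k s a + uB k s a"
      QB uA "\<lambda>k s a. uB k s a - uA k s a" e Qs d T al g be K
    by unfold_locales (fact assms rec_A' rec_B' close small e)+
  have "(\<lambda>k. (QA k s a + uA k s a) - uA k s a) \<longlonglongrightarrow> Qs s a - 0"
    using LIMSEQ_fixpoint[of s a] uA by (intro tendsto_diff) auto
  moreover have "(\<lambda>k. (QB k s a + uB k s a) - uB k s a) \<longlonglongrightarrow> Qs s a - 0"
    using LIMSEQ_fixpoint[of s a] uB by (intro tendsto_diff) auto
  ultimately show ?thesis by simp
qed

section \<open>Martingale differences along an i.i.d. sequence\<close>

definition prefix_determined :: "nat \<Rightarrow> ((nat \<Rightarrow> 'z) \<Rightarrow> 'b) \<Rightarrow> bool" where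
  "prefix_determined k G \<longleftrightarrow> (\<forall>xs ys. (\<forall>j<k. xs j = ys j) \<longrightarrow> G xs = G ys)"

lemma prefix_determinedD: "prefix_determined k G \<Longrightarrow> (\<And>j. j < k \<Longrightarrow> xs j = ys j) \<Longrightarrow> G xs = G ys"
  unfolding prefix_determined_def by blast

lemma prefix_determined_mono: "prefix_determined k G \<Longrightarrow> k \<le> m \<Longrightarrow> prefix_determined m G"
  unfolding prefix_determined_def by auto

lemma prefix_determined_const: "prefix_determined k (\<lambda>_. c)"
  unfolding prefix_determined_def by simp

lemma prefix_determined_comp: "prefix_determined k G \<Longrightarrow> prefix_determined k (\<lambda>xs. h (G xs))"
  unfolding prefix_determined_def by metis

lemma prefix_determined_mult:
  fixes F G :: "(nat \<Rightarrow> 'z) \<Rightarrow> 'b::times"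
  assumes "prefix_determined k F" "prefix_determined k G"
  shows "prefix_determined k (\<lambda>xs. F xs * G xs)"
  unfolding prefix_determined_def
proof (intro allI impI)
  fix xs ys :: "nat \<Rightarrow> 'z" assume "\<forall>j<k. xs j = ys j"
  then have "F xs = F ys" "G xs = G ys"
    using prefix_determinedD[OF assms(1), of xs ys] prefix_determinedD[OF assms(2), of xs ys] by auto
  then show "F xs * G xs = F ys * G ys" by simp
qed

lemma prefix_determined_power:
  fixes G :: "(nat \<Rightarrow> 'z) \<Rightarrow> 'b::power"
  shows "prefix_determined k G \<Longrightarrow> prefix_determined k (\<lambda>xs. G xs ^ n)"
  by (rule prefix_determined_comp[where h="\<lambda>x. x ^ n"])

lemma prefix_determined_sum:
  fixes F :: "'i \<Rightarrow> (nat \<Rightarrow> 'z) \<Rightarrow> 'b::comm_monoid_add"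
  assumes "\<And>i. i \<in> A \<Longrightarrow> prefix_determined k (F i)"
  shows "prefix_determined k (\<lambda>xs. \<Sum>i\<in>A. F i xs)"
  unfolding prefix_determined_def
proof (intro allI impI)
  fix xs ys :: "nat \<Rightarrow> 'z" assume same: "\<forall>j<k. xs j = ys j"
  have "F i xs = F i ys" if "i \<in> A" for i
    using prefix_determinedD[OF assms[OF that], of xs ys] same by auto
  then show "(\<Sum>i\<in>A. F i xs) = (\<Sum>i\<in>A. F i ys)" by (rule sum.cong[OF refl])
qed

lemma prefix_determined_apply_Suc:
  fixes F :: "(nat \<Rightarrow> 'z) \<Rightarrow> 'z \<Rightarrow> 'b"
  assumes "\<And>z. prefix_determined k (\<lambda>xs. F xs z)"
  shows "prefix_determined (Suc k) (\<lambda>xs. F xs (xs k))"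
  unfolding prefix_determined_def
proof (intro allI impI)
  fix xs ys :: "nat \<Rightarrow> 'z" assume same: "\<forall>j<Suc k. xs j = ys j"
  then have "F xs z = F ys z" for z using prefix_determinedD[OF assms[of z], of xs ys] by auto
  with same show "F xs (xs k) = F ys (ys k)" by simp
qed

lemma prefix_determined_restrict:
  "prefix_determined k G \<Longrightarrow> G xs = G (\<lambda>j. if j < k then restrict xs {..<k} j else undefined)"
  using prefix_determinedD[of k G xs "\<lambda>j. if j < k then restrict xs {..<k} j else undefined"] by simp

lemma prefix_determined_bounded:
  fixes G :: "(nat \<Rightarrow> 'z::finite) \<Rightarrow> real"
  assumes "prefix_determined k G"
  shows "\<exists>B. \<forall>xs. \<bar>G xs\<bar> \<le> B"
proof -
  define G' where "G' v = G (\<lambda>j. if j < k then v j else undefined)" for v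
  have "finite (abs ` G' ` PiE {..<k} (\<lambda>_. UNIV))" by (intro finite_imageI finite_PiE) auto
  moreover have "\<bar>G xs\<bar> \<in> abs ` G' ` PiE {..<k} (\<lambda>_. UNIV)" for xs
  proof -
    have "G xs = G' (restrict xs {..<k})"
      using prefix_determined_restrict[OF assms, of xs] by (simp add: G'_def)
    moreover have "restrict xs {..<k} \<in> PiE {..<k} (\<lambda>_. UNIV)" by simp
    ultimately show ?thesis by blast
  qed
  ultimately show ?thesis by (meson Max_ge)
qed

locale iid_sequence = prob_space M for M :: "'m measure" +
  fixes X :: "nat \<Rightarrow> 'm \<Rightarrow> 'z::finite" and mu :: "'z pmf"
  assumes measurable_X: "\<And>k. X k \<in> measurable M (count_space UNIV)"
    and indep_X: "indep_vars (\<lambda>_. count_space UNIV) X UNIV"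
    and distr_X: "\<And>k. distr M (count_space UNIV) (X k) = measure_pmf mu"
begin

definition path :: "'m \<Rightarrow> nat \<Rightarrow> 'z" where
  "path \<omega> = (\<lambda>j. X j \<omega>)"

lemma prefix_restrict_measurable:
  "(\<lambda>\<omega>. restrict (\<lambda>j. X j \<omega>) I) \<in> measurable M (count_space (PiE I (\<lambda>_. UNIV)))" if "finite I"
  using measurable_restrict[of I X M "\<lambda>_. count_space UNIV"] measurable_X that
  by (simp add: count_space_PiM_finite)

lemma measurable_prefix_determined:
  fixes G :: "(nat \<Rightarrow> 'z) \<Rightarrow> real"
  assumes "prefix_determined k G"
  shows "(\<lambda>\<omega>. G (path \<omega>)) \<in> borel_measurable M"
proof -
  have "(\<lambda>\<omega>. G (\<lambda>j. if j < k then restrict (\<lambda>j. X j \<omega>) {..<k} j else undefined)) \<in> borel_measurable M"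
    by (rule measurable_compose[OF prefix_restrict_measurable borel_measurable_count_space]) simp
  then show ?thesis using prefix_determined_restrict[OF assms] by (simp add: path_def)
qed

lemma integrable_prefix_determined:
  fixes G :: "(nat \<Rightarrow> 'z) \<Rightarrow> real"
  assumes "prefix_determined k G"
  shows "integrable M (\<lambda>\<omega>. G (path \<omega>))"
proof -
  obtain B where "\<And>xs. \<bar>G xs\<bar> \<le> B" using prefix_determined_bounded[OF assms] by blast
  then show ?thesis
    by (intro integrable_const_bound[where B=B] measurable_prefix_determined[OF assms]) auto
qed

lemma sets_prefix_determined:
  assumes "prefix_determined k (P :: (nat \<Rightarrow> 'z) \<Rightarrow> bool)"
  shows "{\<omega>\<in>space M. P (path \<omega>)} \<in> sets M"
proof -
  have "(\<lambda>\<omega>. of_bool (P (path \<omega>)) :: real) \<in> borel_measurable M"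
    by (rule measurable_prefix_determined[OF prefix_determined_comp[OF assms]])
  from measurable_sets[OF this, of "{1}"] show ?thesis
    by (simp add: vimage_def Int_def conj_commute)
qed

lemma integral_X: "(\<integral>\<omega>. h (X k \<omega>) \<partial>M) = (\<Sum>z\<in>UNIV. pmf mu z * h z)"
proof -
  have "(\<integral>\<omega>. h (X k \<omega>) \<partial>M) = integral\<^sup>L (distr M (count_space UNIV) (X k)) h"
    by (rule integral_distr[symmetric]) (auto intro: measurable_X)
  also have "\<dots> = (\<Sum>z\<in>UNIV. pmf mu z * h z)"
    by (simp add: distr_X integral_measure_pmf[of UNIV])
  finally show ?thesis .
qed

lemma indep_prefix_determined_X:
  fixes G :: "(nat \<Rightarrow> 'z) \<Rightarrow> real" and h :: "'z \<Rightarrow> real"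
  assumes "prefix_determined k G"
  shows "indep_var borel (\<lambda>\<omega>. G (path \<omega>)) borel (\<lambda>\<omega>. h (X k \<omega>))"
proof -
  have "indep_var (PiM {..<k} (\<lambda>_. count_space UNIV)) (\<lambda>\<omega>. restrict (\<lambda>i. X i \<omega>) {..<k})
      (PiM {k} (\<lambda>_. count_space UNIV)) (\<lambda>\<omega>. restrict (\<lambda>i. X i \<omega>) {k})"
    by (rule indep_var_restrict[OF indep_X]) auto
  then have "indep_var borel ((\<lambda>v. G (\<lambda>j. if j < k then v j else undefined)) \<circ> (\<lambda>\<omega>. restrict (\<lambda>i. X i \<omega>) {..<k}))
      borel ((\<lambda>v. h (v k)) \<circ> (\<lambda>\<omega>. restrict (\<lambda>i. X i \<omega>) {k}))"
    by (rule indep_var_compose) (simp_all add: count_space_PiM_finite)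
  moreover have "(\<lambda>v. G (\<lambda>j. if j < k then v j else undefined)) \<circ> (\<lambda>\<omega>. restrict (\<lambda>i. X i \<omega>) {..<k})
      = (\<lambda>\<omega>. G (path \<omega>))"
    using prefix_determined_restrict[OF assms] by (auto simp: path_def)
  ultimately show ?thesis by (simp add: o_def)
qed

text \<open>Conditioning on the past: the next sample is independent of it and has law \<open>mu\<close>.\<close>

lemma integral_prefix_determined_X:
  fixes F :: "(nat \<Rightarrow> 'z) \<Rightarrow> 'z \<Rightarrow> real"
  assumes F: "\<And>z. prefix_determined k (\<lambda>xs. F xs z)"
  shows "(\<integral>\<omega>. F (path \<omega>) (X k \<omega>) \<partial>M) = (\<integral>\<omega>. (\<Sum>z\<in>UNIV. pmf mu z * F (path \<omega>) z) \<partial>M)"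
proof -
  have point: "F (path \<omega>) (X k \<omega>) = (\<Sum>z\<in>UNIV. F (path \<omega>) z * indicator {z} (X k \<omega>))" for \<omega>
    by (subst sum.mono_neutral_right[of UNIV "{X k \<omega>}"]) auto
  have ind: "integrable M (\<lambda>\<omega>. indicator {z} (X k \<omega>) :: real)" for z
    using integrable_prefix_determined[of "Suc k" "\<lambda>xs. indicator {z} (xs k)"]
    by (simp add: prefix_determined_def path_def)
  have ind_pmf: "(\<integral>\<omega>. indicator {z} (X k \<omega>) \<partial>M) = pmf mu z" for z
    by (subst integral_X) (simp add: indicator_def)
  have int_F: "integrable M (\<lambda>\<omega>. F (path \<omega>) z)" for z
    by (rule integrable_prefix_determined[OF F])
  have int_F_ind: "integrable M (\<lambda>\<omega>. F (path \<omega>) z * indicator {z} (X k \<omega>))" for z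
  proof -
    have "prefix_determined (Suc k) (\<lambda>xs. F xs z * indicator {z} (xs k))"
      by (rule prefix_determined_apply_Suc[where F="\<lambda>xs y. F xs z * indicator {z} y"])
        (rule prefix_determined_mult[OF F prefix_determined_const])
    from integrable_prefix_determined[OF this] show ?thesis by (simp add: path_def)
  qed
  have "(\<integral>\<omega>. F (path \<omega>) (X k \<omega>) \<partial>M)
      = (\<Sum>z\<in>UNIV. \<integral>\<omega>. F (path \<omega>) z * indicator {z} (X k \<omega>) \<partial>M)"
    unfolding point by (rule Bochner_Integration.integral_sum[OF int_F_ind])
  also have "\<dots> = (\<Sum>z\<in>UNIV. (\<integral>\<omega>. F (path \<omega>) z \<partial>M) * (\<integral>\<omega>. indicator {z} (X k \<omega>) \<partial>M))"
    by (intro sum.cong refl indep_var_lebesgue_integral indep_prefix_determined_X F int_F ind)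
  also have "\<dots> = (\<Sum>z\<in>UNIV. \<integral>\<omega>. pmf mu z * F (path \<omega>) z \<partial>M)"
    by (simp add: ind_pmf mult.commute)
  also have "\<dots> = (\<integral>\<omega>. (\<Sum>z\<in>UNIV. pmf mu z * F (path \<omega>) z) \<partial>M)"
    by (rule Bochner_Integration.integral_sum[symmetric]) (simp add: int_F)
  finally show ?thesis .
qed

end

context iid_sequence
begin

context
  fixes phi :: "nat \<Rightarrow> (nat \<Rightarrow> 'z) \<Rightarrow> 'z \<Rightarrow> real" and al :: "nat \<Rightarrow> real" and C :: real
  assumes phi_determined: "\<And>k z. prefix_determined k (\<lambda>xs. phi k xs z)"
    and phi_bounded: "\<And>k xs z. \<bar>phi k xs z\<bar> \<le> C"
    and phi_mean_zero: "\<And>k xs. (\<Sum>z\<in>UNIV. pmf mu z * phi k xs z) = 0"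
begin

definition increment :: "nat \<Rightarrow> (nat \<Rightarrow> 'z) \<Rightarrow> real" where
  "increment k xs = al k * phi k xs (xs k)"

definition increments_sum :: "nat \<Rightarrow> nat \<Rightarrow> (nat \<Rightarrow> 'z) \<Rightarrow> real" where
  "increments_sum n j xs = (\<Sum>k\<in>{n..<j}. increment k xs)"

lemma increment_determined:
  assumes "k < m"
  shows "prefix_determined m (increment k)"
proof -
  have "prefix_determined (Suc k) (\<lambda>xs. al k * phi k xs (xs k))"
    by (rule prefix_determined_apply_Suc[where F="\<lambda>xs z. al k * phi k xs z"])
      (rule prefix_determined_mult[OF prefix_determined_const phi_determined])
  then show ?thesis
    using assms unfolding increment_def[abs_def] by (auto intro: prefix_determined_mono)
qed

lemma increments_sum_determined: "prefix_determined j (increments_sum n j)"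
  unfolding increments_sum_def by (intro prefix_determined_sum increment_determined) auto

lemma increment_square_le: "(increment k xs)\<^sup>2 \<le> C\<^sup>2 * (al k)\<^sup>2"
proof -
  have "\<bar>phi k xs (xs k)\<bar> \<le> \<bar>C\<bar>" using phi_bounded[of k xs "xs k"] by linarith
  then have "(phi k xs (xs k))\<^sup>2 \<le> C\<^sup>2" by (simp add: abs_le_square_iff)
  then have "(al k)\<^sup>2 * (phi k xs (xs k))\<^sup>2 \<le> (al k)\<^sup>2 * C\<^sup>2" by (rule mult_left_mono) simp
  then show ?thesis by (simp add: increment_def power_mult_distrib mult.commute)
qed

lemma integral_mult_increment_eq_0:
  assumes G: "prefix_determined k G"
  shows "(\<integral>\<omega>. G (path \<omega>) * increment k (path \<omega>) \<partial>M) = 0"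
proof -
  have "(\<integral>\<omega>. G (path \<omega>) * increment k (path \<omega>) \<partial>M)
      = (\<integral>\<omega>. G (path \<omega>) * al k * phi k (path \<omega>) (X k \<omega>) \<partial>M)"
    by (simp add: increment_def path_def mult.assoc)
  also have "\<dots> = (\<integral>\<omega>. (\<Sum>z\<in>UNIV. pmf mu z * (G (path \<omega>) * al k * phi k (path \<omega>) z)) \<partial>M)"
    by (rule integral_prefix_determined_X[where F="\<lambda>xs z. G xs * al k * phi k xs z"])
      (intro prefix_determined_mult G phi_determined prefix_determined_const)
  also have "\<dots> = (\<integral>\<omega>. G (path \<omega>) * al k * (\<Sum>z\<in>UNIV. pmf mu z * phi k (path \<omega>) z) \<partial>M)"
    by (simp add: sum_distrib_left mult_ac)
  finally show ?thesis by (simp add: phi_mean_zero)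
qed

lemma integral_square_add_increment_le:
  fixes S w :: "(nat \<Rightarrow> 'z) \<Rightarrow> real"
  assumes S: "prefix_determined m S" and w: "prefix_determined m w" and w_bounded: "\<And>xs. \<bar>w xs\<bar> \<le> 1"
  shows "(\<integral>\<omega>. (S (path \<omega>) + w (path \<omega>) * increment m (path \<omega>))\<^sup>2 \<partial>M)
    \<le> (\<integral>\<omega>. (S (path \<omega>))\<^sup>2 \<partial>M) + C\<^sup>2 * (al m)\<^sup>2"
proof -
  have Sw: "prefix_determined m (\<lambda>xs. 2 * S xs * w xs)"
    by (intro prefix_determined_mult S w prefix_determined_const)
  have t: "prefix_determined (Suc m) (\<lambda>xs. w xs * increment m xs)"
    by (intro prefix_determined_mult increment_determined prefix_determined_mono[OF w]) auto
  have t_le: "(w xs * increment m xs)\<^sup>2 \<le> C\<^sup>2 * (al m)\<^sup>2" for xs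
  proof -
    have "(w xs)\<^sup>2 \<le> 1" using w_bounded[of xs] by (simp add: abs_le_square_iff[of _ 1, simplified])
    then have "(w xs)\<^sup>2 * (increment m xs)\<^sup>2 \<le> 1 * (C\<^sup>2 * (al m)\<^sup>2)"
      using increment_square_le by (intro mult_mono) auto
    then show ?thesis by (simp add: power_mult_distrib)
  qed
  have expand: "(S xs + w xs * increment m xs)\<^sup>2
      = (S xs)\<^sup>2 + 2 * S xs * w xs * increment m xs + (w xs * increment m xs)\<^sup>2" for xs
    by (simp add: power2_sum algebra_simps)
  have "integrable M (\<lambda>\<omega>. (S (path \<omega>))\<^sup>2)"
    by (intro integrable_prefix_determined[of m] prefix_determined_power S)
  moreover have "integrable M (\<lambda>\<omega>. 2 * S (path \<omega>) * w (path \<omega>) * increment m (path \<omega>))"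
    by (intro integrable_prefix_determined[of "Suc m"] prefix_determined_mult
        prefix_determined_mono[OF Sw] increment_determined) auto
  moreover have t_int: "integrable M (\<lambda>\<omega>. (w (path \<omega>) * increment m (path \<omega>))\<^sup>2)"
    by (intro integrable_prefix_determined[of "Suc m"] prefix_determined_power t)
  ultimately have "(\<integral>\<omega>. (S (path \<omega>) + w (path \<omega>) * increment m (path \<omega>))\<^sup>2 \<partial>M)
      = (\<integral>\<omega>. (S (path \<omega>))\<^sup>2 \<partial>M)
        + (\<integral>\<omega>. 2 * S (path \<omega>) * w (path \<omega>) * increment m (path \<omega>) \<partial>M)
        + (\<integral>\<omega>. (w (path \<omega>) * increment m (path \<omega>))\<^sup>2 \<partial>M)"
    by (simp add: expand)
  also have "(\<integral>\<omega>. 2 * S (path \<omega>) * w (path \<omega>) * increment m (path \<omega>) \<partial>M) = 0"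
    by (rule integral_mult_increment_eq_0[OF Sw])
  also have "(\<integral>\<omega>. (w (path \<omega>) * increment m (path \<omega>))\<^sup>2 \<partial>M) \<le> (\<integral>\<omega>. C\<^sup>2 * (al m)\<^sup>2 \<partial>M)"
    by (intro integral_mono t_int t_le) simp
  finally show ?thesis by (simp add: prob_space)
qed

lemma integral_weighted_increments_square_le:
  fixes c :: "nat \<Rightarrow> (nat \<Rightarrow> 'z) \<Rightarrow> real"
  assumes c_determined: "\<And>k. prefix_determined k (c k)" and c_bounded: "\<And>k xs. \<bar>c k xs\<bar> \<le> 1"
  shows "(\<integral>\<omega>. (\<Sum>k\<in>{n..<m}. c k (path \<omega>) * increment k (path \<omega>))\<^sup>2 \<partial>M)
    \<le> C\<^sup>2 * (\<Sum>k\<in>{n..<m}. (al k)\<^sup>2)"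
proof (induction m)
  case (Suc m)
  show ?case
  proof (cases "n \<le> m")
    case True
    have S: "prefix_determined m (\<lambda>xs. \<Sum>k\<in>{n..<m}. c k xs * increment k xs)"
      by (intro prefix_determined_sum prefix_determined_mult c_determined[THEN prefix_determined_mono]
          increment_determined) auto
    have "(\<integral>\<omega>. (\<Sum>k\<in>{n..<Suc m}. c k (path \<omega>) * increment k (path \<omega>))\<^sup>2 \<partial>M)
      = (\<integral>\<omega>. ((\<Sum>k\<in>{n..<m}. c k (path \<omega>) * increment k (path \<omega>))
            + c m (path \<omega>) * increment m (path \<omega>))\<^sup>2 \<partial>M)"
      using True by simp
    also have "\<dots> \<le> (\<integral>\<omega>. (\<Sum>k\<in>{n..<m}. c k (path \<omega>) * increment k (path \<omega>))\<^sup>2 \<partial>M) + C\<^sup>2 * (al m)\<^sup>2"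
      by (rule integral_square_add_increment_le[OF S c_determined c_bounded])
    also have "\<dots> \<le> C\<^sup>2 * (\<Sum>k\<in>{n..<Suc m}. (al k)\<^sup>2)"
      using Suc.IH True by (simp add: algebra_simps)
    finally show ?thesis .
  qed simp
qed simp

definition not_exceeded :: "real \<Rightarrow> nat \<Rightarrow> nat \<Rightarrow> (nat \<Rightarrow> 'z) \<Rightarrow> real" where
  "not_exceeded \<epsilon> n k xs = of_bool (\<forall>i\<in>{n..k}. \<bar>increments_sum n i xs\<bar> < \<epsilon>)"

lemma not_exceeded_determined: "prefix_determined k (not_exceeded \<epsilon> n k)"
  unfolding prefix_determined_def
proof (intro allI impI)
  fix xs ys :: "nat \<Rightarrow> 'z" assume same: "\<forall>j<k. xs j = ys j"
  have "increments_sum n i xs = increments_sum n i ys" if "i \<in> {n..k}" for i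
    using prefix_determinedD[OF increments_sum_determined[of i n], of xs ys] same that by auto
  then show "not_exceeded \<epsilon> n k xs = not_exceeded \<epsilon> n k ys" by (simp add: not_exceeded_def)
qed

text \<open>Stopping the partial sums the first time they reach \<open>\<epsilon>\<close>: this reduces Kolmogorov's
  maximal inequality to the second moment bound above.\<close>

lemma exceedance_le_stopped_sum:
  assumes exceeds: "\<exists>j\<in>{n..m}. \<epsilon> \<le> \<bar>increments_sum n j xs\<bar>"
  shows "\<epsilon> \<le> \<bar>\<Sum>k\<in>{n..<m}. not_exceeded \<epsilon> n k xs * increment k xs\<bar>"
proof -
  let ?P = "\<lambda>j. n \<le> j \<and> \<epsilon> \<le> \<bar>increments_sum n j xs\<bar>"
  define j0 where "j0 = (LEAST j. ?P j)"
  obtain j where j: "j \<in> {n..m}" "\<epsilon> \<le> \<bar>increments_sum n j xs\<bar>" using exceeds by blast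
  have j0: "n \<le> j0" "\<epsilon> \<le> \<bar>increments_sum n j0 xs\<bar>"
    using LeastI[of ?P j] j unfolding j0_def by auto
  have "j0 \<le> m" using Least_le[of ?P j] j unfolding j0_def by auto
  have stop: "not_exceeded \<epsilon> n k xs = (if k < j0 then 1 else 0)" if "n \<le> k" for k
  proof (cases "k < j0")
    case True
    have "\<bar>increments_sum n i xs\<bar> < \<epsilon>" if "n \<le> i" "i < j0" for i
      using not_less_Least[of i ?P] that unfolding j0_def by auto
    with True show ?thesis by (auto simp: not_exceeded_def)
  next
    case False
    with j0 that show ?thesis by (auto simp: not_exceeded_def not_less)
  qed
  have "(\<Sum>k\<in>{n..<m}. not_exceeded \<epsilon> n k xs * increment k xs)
      = (\<Sum>k\<in>{n..<m}. if k < j0 then increment k xs else 0)"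
    by (rule sum.cong) (auto simp: stop)
  also have "\<dots> = (\<Sum>k\<in>{k\<in>{n..<m}. k < j0}. increment k xs)"
    by (rule sum.inter_filter[symmetric]) simp
  also have "{k\<in>{n..<m}. k < j0} = {n..<j0}" using \<open>j0 \<le> m\<close> by auto
  finally show ?thesis using j0 by (simp add: increments_sum_def)
qed

lemma exceeds_determined: "prefix_determined j (\<lambda>xs. \<epsilon> \<le> \<bar>increments_sum n j xs\<bar>)"
  by (rule prefix_determined_comp[OF increments_sum_determined[of j n], where h="\<lambda>x. \<epsilon> \<le> \<bar>x\<bar>"])

lemma prob_exceedance_le:
  assumes "0 < \<epsilon>"
  shows "prob {\<omega>\<in>space M. \<exists>j\<in>{n..m}. \<epsilon> \<le> \<bar>increments_sum n j (path \<omega>)\<bar>}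
    \<le> C\<^sup>2 * (\<Sum>k\<in>{n..<m}. (al k)\<^sup>2) / \<epsilon>\<^sup>2"
proof -
  define S where "S xs = (\<Sum>k\<in>{n..<m}. not_exceeded \<epsilon> n k xs * increment k xs)" for xs
  have S: "prefix_determined m S"
    unfolding S_def
    by (intro prefix_determined_sum prefix_determined_mult increment_determined
        prefix_determined_mono[OF not_exceeded_determined]) auto
  have "prob {\<omega>\<in>space M. \<exists>j\<in>{n..m}. \<epsilon> \<le> \<bar>increments_sum n j (path \<omega>)\<bar>}
      \<le> prob {\<omega>\<in>space M. \<epsilon> \<le> \<bar>S (path \<omega>)\<bar>}"
  proof (rule finite_measure_mono)
    show "{\<omega>\<in>space M. \<exists>j\<in>{n..m}. \<epsilon> \<le> \<bar>increments_sum n j (path \<omega>)\<bar>}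
        \<subseteq> {\<omega>\<in>space M. \<epsilon> \<le> \<bar>S (path \<omega>)\<bar>}"
      using exceedance_le_stopped_sum unfolding S_def by blast
    show "{\<omega>\<in>space M. \<epsilon> \<le> \<bar>S (path \<omega>)\<bar>} \<in> sets M"
      by (rule sets_prefix_determined[OF prefix_determined_comp[OF S, where h="\<lambda>x. \<epsilon> \<le> \<bar>x\<bar>"]])
  qed
  also have "\<dots> \<le> (\<integral>\<omega>. (S (path \<omega>))\<^sup>2 \<partial>M) / \<epsilon>\<^sup>2"
    by (rule second_moment_method)
      (use assms in \<open>auto intro: measurable_prefix_determined[OF S]
         integrable_prefix_determined[OF prefix_determined_power[OF S]]\<close>)
  also have "\<dots> \<le> C\<^sup>2 * (\<Sum>k\<in>{n..<m}. (al k)\<^sup>2) / \<epsilon>\<^sup>2"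
    using integral_weighted_increments_square_le[of "not_exceeded \<epsilon> n" n m]
    by (intro divide_right_mono) (auto simp: S_def not_exceeded_determined not_exceeded_def)
  finally show ?thesis .
qed

lemma sets_exceedance_tail:
  "{\<omega>\<in>space M. \<exists>j\<ge>n. \<epsilon> \<le> \<bar>increments_sum n j (path \<omega>)\<bar>} \<in> sets M"
proof -
  have "{\<omega>\<in>space M. \<exists>j\<ge>n. \<epsilon> \<le> \<bar>increments_sum n j (path \<omega>)\<bar>}
      = (\<Union>j\<in>{n..}. {\<omega>\<in>space M. \<epsilon> \<le> \<bar>increments_sum n j (path \<omega>)\<bar>})"
    by auto
  also have "\<dots> \<in> sets M"
    by (intro sets.countable_UN'[OF countableI_type] image_subsetI
        sets_prefix_determined[OF exceeds_determined])
  finally show ?thesis .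
qed

lemma prob_exceedance_tail_le:
  assumes "0 < \<epsilon>" and square_summable: "summable (\<lambda>k. (al k)\<^sup>2)"
  shows "prob {\<omega>\<in>space M. \<exists>j\<ge>n. \<epsilon> \<le> \<bar>increments_sum n j (path \<omega>)\<bar>}
    \<le> C\<^sup>2 * (\<Sum>k. (al (k + n))\<^sup>2) / \<epsilon>\<^sup>2"
proof -
  define A where "A m = {\<omega>\<in>space M. \<exists>j\<in>{n..m}. \<epsilon> \<le> \<bar>increments_sum n j (path \<omega>)\<bar>}" for m
  have A_sets: "A m \<in> sets M" for m
  proof -
    have "A m = (\<Union>j\<in>{n..m}. {\<omega>\<in>space M. \<epsilon> \<le> \<bar>increments_sum n j (path \<omega>)\<bar>})"
      unfolding A_def by auto
    also have "\<dots> \<in> sets M"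
      by (intro sets.finite_UN finite_atLeastAtMost ballI sets_prefix_determined[OF exceeds_determined])
    finally show ?thesis .
  qed
  have "(\<lambda>m. prob (A m)) \<longlonglongrightarrow> prob (\<Union>m. A m)"
  proof (rule finite_Lim_measure_incseq)
    show "range A \<subseteq> sets M" using A_sets by auto
    show "incseq A" by (rule incseq_SucI) (force simp: A_def)
  qed
  moreover have "prob (A m) \<le> C\<^sup>2 * (\<Sum>k. (al (k + n))\<^sup>2) / \<epsilon>\<^sup>2" for m
  proof -
    have "prob (A m) \<le> C\<^sup>2 * (\<Sum>k\<in>{n..<m}. (al k)\<^sup>2) / \<epsilon>\<^sup>2"
      unfolding A_def by (rule prob_exceedance_le[OF assms(1)])
    also have "\<dots> \<le> C\<^sup>2 * (\<Sum>k. (al (k + n))\<^sup>2) / \<epsilon>\<^sup>2"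
      using sum_atLeastLessThan_le_suminf_shift[OF square_summable, of n m]
      by (intro divide_right_mono mult_left_mono) auto
    finally show ?thesis .
  qed
  ultimately have "prob (\<Union>m. A m) \<le> C\<^sup>2 * (\<Sum>k. (al (k + n))\<^sup>2) / \<epsilon>\<^sup>2"
    by (intro LIMSEQ_le_const2) blast+
  moreover have "(\<Union>m. A m) = {\<omega>\<in>space M. \<exists>j\<ge>n. \<epsilon> \<le> \<bar>increments_sum n j (path \<omega>)\<bar>}"
    unfolding A_def by force
  ultimately show ?thesis by simp
qed

lemma AE_increments_sum_small:
  assumes square_summable: "summable (\<lambda>k. (al k)\<^sup>2)"
  shows "AE \<omega> in M. \<forall>l. \<exists>n. \<forall>j\<ge>n. \<bar>increments_sum n j (path \<omega>)\<bar> < inverse (real (Suc l))"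
proof (unfold AE_all_countable, intro allI)
  fix l
  define \<epsilon> where "\<epsilon> = inverse (real (Suc l))"
  have "0 < \<epsilon>" by (simp add: \<epsilon>_def)
  define N where "N = (\<Inter>n. {\<omega>\<in>space M. \<exists>j\<ge>n. \<epsilon> \<le> \<bar>increments_sum n j (path \<omega>)\<bar>})"
  have N_sets: "N \<in> sets M" unfolding N_def
    by (rule sets.countable_INT) (intro image_subsetI sets_exceedance_tail, simp)
  have "prob N \<le> C\<^sup>2 * (\<Sum>k. (al (k + n))\<^sup>2) / \<epsilon>\<^sup>2" for n
  proof -
    have "prob N \<le> prob {\<omega>\<in>space M. \<exists>j\<ge>n. \<epsilon> \<le> \<bar>increments_sum n j (path \<omega>)\<bar>}"
    proof (rule finite_measure_mono[OF _ sets_exceedance_tail])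
      show "N \<subseteq> {\<omega>\<in>space M. \<exists>j\<ge>n. \<epsilon> \<le> \<bar>increments_sum n j (path \<omega>)\<bar>}"
        unfolding N_def by blast
    qed
    then show ?thesis using prob_exceedance_tail_le[OF \<open>0 < \<epsilon>\<close> square_summable, of n] by linarith
  qed
  moreover have "(\<lambda>n. C\<^sup>2 * (\<Sum>k. (al (k + n))\<^sup>2) / \<epsilon>\<^sup>2) \<longlonglongrightarrow> C\<^sup>2 * 0 / \<epsilon>\<^sup>2"
    using \<open>0 < \<epsilon>\<close>
    by (intro tendsto_divide tendsto_mult tendsto_const suminf_exist_split2 square_summable) auto
  ultimately have "prob N \<le> C\<^sup>2 * 0 / \<epsilon>\<^sup>2"
    by (intro LIMSEQ_le_const) blast+
  then have "prob N \<le> 0" by simp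
  then have "N \<in> null_sets M"
    using N_sets measure_nonneg[of M N] by (intro null_setsI) (simp_all add: emeasure_eq_measure)
  then have "AE \<omega> in M. \<omega> \<notin> N" by (rule AE_not_in)
  then show "AE \<omega> in M. \<exists>n. \<forall>j\<ge>n. \<bar>increments_sum n j (path \<omega>)\<bar> < inverse (real (Suc l))"
    using AE_space
  proof eventually_elim
    case (elim \<omega>)
    then obtain n where "\<not> (\<exists>j\<ge>n. \<epsilon> \<le> \<bar>increments_sum n j (path \<omega>)\<bar>)"
      unfolding N_def by blast
    then have "\<forall>j\<ge>n. \<bar>increments_sum n j (path \<omega>)\<bar> < \<epsilon>" by (meson not_le)
    then show ?case unfolding \<epsilon>_def by blast
  qed
qed

theorem AE_convergent_martingale_difference_sum:
  assumes "summable (\<lambda>k. (al k)\<^sup>2)"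
  shows "AE \<omega> in M. convergent (\<lambda>m. \<Sum>k<m. al k * phi k (path \<omega>) (X k \<omega>))"
  using AE_increments_sum_small[OF assms]
proof eventually_elim
  case (elim \<omega>)
  have "convergent (\<lambda>m. \<Sum>k<m. increment k (path \<omega>))"
  proof (rule convergent_sum_if_block_sums_small)
    fix e :: real assume "0 < e"
    then obtain l where l: "inverse (real (Suc l)) < e" using reals_Archimedean by blast
    from elim obtain n where n: "\<And>j. n \<le> j \<Longrightarrow> \<bar>increments_sum n j (path \<omega>)\<bar> < inverse (real (Suc l))"
      by blast
    show "\<exists>n. \<forall>j\<ge>n. \<bar>\<Sum>k\<in>{n..<j}. increment k (path \<omega>)\<bar> < e"
    proof (intro exI[of _ n] allI impI)
      fix j assume "n \<le> j"
      then show "\<bar>\<Sum>k\<in>{n..<j}. increment k (path \<omega>)\<bar> < e"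
        using n[of j] l unfolding increments_sum_def by linarith
    qed
  qed
  then show ?case by (simp add: increment_def path_def)
qed

end

end

section \<open>The AGT2-QL iteration\<close>

definition bellman_op ::
  "('s::finite \<Rightarrow> 'a::finite \<Rightarrow> 's pmf) \<Rightarrow> ('s \<Rightarrow> 'a \<Rightarrow> 's \<Rightarrow> real) \<Rightarrow> real
   \<Rightarrow> ('s \<Rightarrow> 'a \<Rightarrow> real) \<Rightarrow> 's \<Rightarrow> 'a \<Rightarrow> real" where
  "bellman_op P r g Q s a = (\<Sum>s'\<in>UNIV. pmf (P s a) s' * (r s a s' + g * (MAX a'\<in>UNIV. Q s' a')))"

lemma bellman_op_fixpoint: "bellman_opt P r g Q \<Longrightarrow> bellman_op P r g Q = Q"
  unfolding bellman_opt_def bellman_op_def by (intro ext) metis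

lemma abs_Max_diff_le:
  fixes f h :: "'a::finite \<Rightarrow> real"
  assumes "\<And>x. \<bar>f x - h x\<bar> \<le> B"
  shows "\<bar>(MAX x\<in>UNIV. f x) - (MAX x\<in>UNIV. h x)\<bar> \<le> B"
proof -
  have "Max (range f) \<in> range f" "Max (range h) \<in> range h" by (intro Max_in; simp)+
  then obtain x0 x1 where x0: "(MAX x\<in>UNIV. f x) = f x0" and x1: "(MAX x\<in>UNIV. h x) = h x1" by blast
  have "h x0 \<le> h x1" "f x1 \<le> f x0" unfolding x0[symmetric] x1[symmetric] by (auto intro: Max_ge)
  with assms[of x0] assms[of x1] show ?thesis unfolding x0 x1 abs_le_iff by linarith
qed

lemma abs_Max_le: "(\<And>x. \<bar>f x\<bar> \<le> B) \<Longrightarrow> \<bar>MAX x\<in>UNIV. f (x::'a::finite)\<bar> \<le> (B::real)"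
  using abs_Max_diff_le[of f "\<lambda>_. 0" B] by simp

lemma bellman_op_contraction:
  assumes "0 \<le> g" and close: "\<And>s' a'. \<bar>Q s' a' - Q' s' a'\<bar> \<le> B"
  shows "\<bar>bellman_op P r g Q s a - bellman_op P r g Q' s a\<bar> \<le> g * B"
proof -
  have "\<bar>bellman_op P r g Q s a - bellman_op P r g Q' s a\<bar>
      = \<bar>\<Sum>s'\<in>UNIV. pmf (P s a) s' * (g * ((MAX a'\<in>UNIV. Q s' a') - (MAX a'\<in>UNIV. Q' s' a')))\<bar>"
    unfolding bellman_op_def sum_subtractf[symmetric] by (simp add: algebra_simps)
  also have "\<dots> \<le> (\<Sum>s'\<in>UNIV. pmf (P s a) s' * (g * B))"
  proof (intro order.trans[OF sum_abs] sum_mono)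
    fix s'
    have "\<bar>(MAX a'\<in>UNIV. Q s' a') - (MAX a'\<in>UNIV. Q' s' a')\<bar> \<le> B"
      by (rule abs_Max_diff_le) (rule close)
    then show "\<bar>pmf (P s a) s' * (g * ((MAX a'\<in>UNIV. Q s' a') - (MAX a'\<in>UNIV. Q' s' a')))\<bar>
        \<le> pmf (P s a) s' * (g * B)"
      using \<open>0 \<le> g\<close> by (simp add: abs_mult mult_left_mono)
  qed
  also have "\<dots> = g * B" by (simp add: sum_distrib_right[symmetric] sum_pmf_eq_1)
  finally show ?thesis .
qed

lemma pmf_sample_pmf: "pmf (sample_pmf p b P) (s, a, s') = pmf p s * pmf (b s) a * pmf (P s a) s'"
proof -
  have point: "measure_pmf.expectation N (\<lambda>y. if y = z then c else 0) = pmf N z * c" for N z and c :: real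
    by (subst integral_measure_pmf[of "{z}"]) (auto split: if_splits)
  have last: "measure_pmf.expectation (P x y) (\<lambda>x'. indicator {(s, a, s')} (x, y, x'))
      = (if x = s \<and> y = a then pmf (P s a) s' else 0)" for x y
  proof (cases "x = s \<and> y = a")
    case True
    then have "(\<lambda>x'. indicator {(s, a, s')} (x, y, x') :: real) = (\<lambda>x'. if x' = s' then 1 else 0)"
      by (auto simp: indicator_def)
    then show ?thesis using True point[of "P s a" s' 1] by simp
  next
    case False
    then have "(\<lambda>x'. indicator {(s, a, s')} (x, y, x') :: real) = (\<lambda>_. 0)"
      by (auto simp: indicator_def)
    then show ?thesis using False by auto
  qed
  have middle: "measure_pmf.expectation (b x) (\<lambda>y. if x = s \<and> y = a then c else 0)
      = (if x = s then pmf (b s) a * c else 0)" for x and c :: real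
    using point[of "b s" a c] by auto
  show ?thesis by (simp add: sample_pmf_def pmf_bind last middle point)
qed

lemma sum_sample_pmf_visit:
  fixes p :: "'s::finite pmf" and b :: "'s \<Rightarrow> 'a::finite pmf" and f :: "'s \<Rightarrow> real"
  shows "(\<Sum>z\<in>UNIV. pmf (sample_pmf p b P) z * (if fst z = s \<and> fst (snd z) = a then f (snd (snd z)) else 0))
    = pmf p s * pmf (b s) a * (\<Sum>s'\<in>UNIV. pmf (P s a) s' * f s')"
proof -
  have "(\<Sum>z\<in>UNIV. pmf (sample_pmf p b P) z * (if fst z = s \<and> fst (snd z) = a then f (snd (snd z)) else 0))
      = (\<Sum>z\<in>(\<lambda>s'. (s, a, s')) ` UNIV. pmf (sample_pmf p b P) z * f (snd (snd z)))"
  proof (rule sum.mono_neutral_cong_right)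
    show "(\<lambda>s'. (s, a, s')) ` UNIV \<subseteq> UNIV" by simp
  qed auto
  also have "\<dots> = (\<Sum>s'\<in>UNIV. pmf (sample_pmf p b P) (s, a, s') * f s')"
    by (subst sum.reindex) (auto simp: inj_on_def)
  also have "\<dots> = pmf p s * pmf (b s) a * (\<Sum>s'\<in>UNIV. pmf (P s a) s' * f s')"
    by (simp add: pmf_sample_pmf sum_distrib_left mult_ac)
  finally show ?thesis .
qed


lemma abs_convex_comb_bounded:
  fixes \<alpha> u v M :: real
  assumes "0 \<le> \<alpha>" "\<alpha> \<le> 1" "\<bar>u\<bar> \<le> M" "\<bar>v\<bar> \<le> M"
  shows "\<bar>(1 - \<alpha>) * u + \<alpha> * v\<bar> \<le> M"
proof -
  have "(1 - \<alpha>) * \<bar>u\<bar> + \<alpha> * \<bar>v\<bar> \<le> (1 - \<alpha>) * M + \<alpha> * M"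
    using assms by (intro add_mono mult_left_mono) auto
  then show ?thesis using abs_convex_comb_le[OF assms(1,2), of u v] by (simp add: algebra_simps)
qed

locale agt2_ql =
  fixes P :: "'s::finite \<Rightarrow> 'a::finite \<Rightarrow> 's pmf" and r :: "'s \<Rightarrow> 'a \<Rightarrow> 's \<Rightarrow> real" and g be :: real
    and al :: "nat \<Rightarrow> real" and QA0 QB0 :: "'s \<Rightarrow> 'a \<Rightarrow> real" and p :: "'s pmf" and b :: "'s \<Rightarrow> 'a pmf"
  assumes g_nonneg: "0 \<le> g" and g_less_1: "g < 1" and be_pos: "0 < be"
    and al_nonneg: "\<And>k. 0 \<le> al k" and al_le_1: "\<And>k. al k \<le> 1"
begin

definition qA :: "nat \<Rightarrow> (nat \<Rightarrow> 's \<times> 'a \<times> 's) \<Rightarrow> 's \<Rightarrow> 'a \<Rightarrow> real" where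
  "qA k xs = fst (agt2_iter r g be al QA0 QB0 xs k)"

definition qB :: "nat \<Rightarrow> (nat \<Rightarrow> 's \<times> 'a \<times> 's) \<Rightarrow> 's \<Rightarrow> 'a \<Rightarrow> real" where
  "qB k xs = snd (agt2_iter r g be al QA0 QB0 xs k)"

definition visit_prob :: "'s \<Rightarrow> 'a \<Rightarrow> real" where
  "visit_prob s a = pmf p s * pmf (b s) a"

text \<open>The observed update direction at \<open>(s, a)\<close> minus its mean over the next sample \<open>z\<close>.\<close>

definition noise_A :: "'s \<Rightarrow> 'a \<Rightarrow> nat \<Rightarrow> (nat \<Rightarrow> 's \<times> 'a \<times> 's) \<Rightarrow> 's \<times> 'a \<times> 's \<Rightarrow> real" where
  "noise_A s a k xs z =
     (if fst z = s \<and> fst (snd z) = a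
      then r s a (snd (snd z)) + g * (MAX a'\<in>UNIV. qB k xs (snd (snd z)) a') - qA k xs s a else 0)
     - visit_prob s a * (bellman_op P r g (qB k xs) s a - qA k xs s a)"

definition noise_B :: "'s \<Rightarrow> 'a \<Rightarrow> nat \<Rightarrow> (nat \<Rightarrow> 's \<times> 'a \<times> 's) \<Rightarrow> 's \<times> 'a \<times> 's \<Rightarrow> real" where
  "noise_B s a k xs z =
     (if fst z = s \<and> fst (snd z) = a then be * (qA k xs s a - qB k xs s a) else 0)
     - visit_prob s a * (be * (qA k xs s a - qB k xs s a))"

definition reward_bound :: real where
  "reward_bound = Max (range (\<lambda>(s, a, s'). \<bar>r s a s'\<bar>))"

lemma qA_Suc_eq: "qA (Suc k) xs = fst (agt2_step r g be (al k) (qA k xs, qB k xs) (xs k))"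
  and qB_Suc_eq: "qB (Suc k) xs = snd (agt2_step r g be (al k) (qA k xs, qB k xs) (xs k))"
  by (simp_all add: qA_def qB_def)

lemma qA_Suc:
  "qA (Suc k) xs s a = qA k xs s a
     + al k * visit_prob s a * (bellman_op P r g (qB k xs) s a - qA k xs s a) + al k * noise_A s a k xs (xs k)"
proof -
  obtain s0 a0 s0' where "xs k = (s0, a0, s0')" by (cases "xs k")
  then show ?thesis
    by (cases "s = s0 \<and> a = a0")
      (auto simp: qA_Suc_eq agt2_step_def noise_A_def algebra_simps)
qed

lemma qB_Suc:
  "qB (Suc k) xs s a = qB k xs s a
     + al k * be * visit_prob s a * (qA k xs s a - qB k xs s a) + al k * noise_B s a k xs (xs k)"
proof -
  obtain s0 a0 s0' where "xs k = (s0, a0, s0')" by (cases "xs k")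
  then show ?thesis
    by (cases "s = s0 \<and> a = a0")
      (auto simp: qB_Suc_eq agt2_step_def noise_B_def algebra_simps)
qed

lemma agt2_iter_determined: "prefix_determined k (\<lambda>xs. agt2_iter r g be al QA0 QB0 xs k)"
proof (induction k)
  case 0
  then show ?case by (simp add: prefix_determined_const)
next
  case (Suc k)
  show ?case
    by (simp only: agt2_iter.simps)
      (rule prefix_determined_apply_Suc[where F="\<lambda>xs. agt2_step r g be (al k) (agt2_iter r g be al QA0 QB0 xs k)"],
        rule prefix_determined_comp[OF Suc.IH])
qed

lemma q_determined:
  "prefix_determined k (\<lambda>xs. h (qA k xs) (qB k xs))"
  unfolding qA_def qB_def
  by (rule prefix_determined_comp[OF agt2_iter_determined, where h="\<lambda>q. h (fst q) (snd q)"])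

lemma noise_A_determined: "prefix_determined k (\<lambda>xs. noise_A s a k xs z)"
  unfolding noise_A_def by (rule q_determined)

lemma noise_B_determined: "prefix_determined k (\<lambda>xs. noise_B s a k xs z)"
  unfolding noise_B_def by (rule q_determined)

lemma noise_A_mean_zero: "(\<Sum>z\<in>UNIV. pmf (sample_pmf p b P) z * noise_A s a k xs z) = 0"
proof -
  let ?obs = "\<lambda>s'. r s a s' + g * (MAX a'\<in>UNIV. qB k xs s' a') - qA k xs s a"
  have "(\<Sum>z\<in>UNIV. pmf (sample_pmf p b P) z * noise_A s a k xs z)
      = (\<Sum>z\<in>UNIV. pmf (sample_pmf p b P) z * (if fst z = s \<and> fst (snd z) = a then ?obs (snd (snd z)) else 0))
        - (\<Sum>z\<in>UNIV. pmf (sample_pmf p b P) z) * (visit_prob s a * (bellman_op P r g (qB k xs) s a - qA k xs s a))"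
    unfolding noise_A_def by (simp add: right_diff_distrib sum_subtractf sum_distrib_right)
  also have "(\<Sum>s'\<in>UNIV. pmf (P s a) s' * ?obs s') = bellman_op P r g (qB k xs) s a - qA k xs s a"
    by (simp add: bellman_op_def right_diff_distrib sum_subtractf sum_distrib_right[symmetric] sum_pmf_eq_1)
  then have "(\<Sum>z\<in>UNIV. pmf (sample_pmf p b P) z * (if fst z = s \<and> fst (snd z) = a then ?obs (snd (snd z)) else 0))
      = visit_prob s a * (bellman_op P r g (qB k xs) s a - qA k xs s a)"
    using sum_sample_pmf_visit[where p=p and b=b and P=P and s=s and a=a and f="?obs"]
    by (simp add: visit_prob_def)
  finally show ?thesis by (simp add: sum_pmf_eq_1)
qed

lemma noise_B_mean_zero: "(\<Sum>z\<in>UNIV. pmf (sample_pmf p b P) z * noise_B s a k xs z) = 0"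
proof -
  let ?obs = "\<lambda>s'::'s. be * (qA k xs s a - qB k xs s a)"
  have "(\<Sum>z\<in>UNIV. pmf (sample_pmf p b P) z * noise_B s a k xs z)
      = (\<Sum>z\<in>UNIV. pmf (sample_pmf p b P) z * (if fst z = s \<and> fst (snd z) = a then ?obs (snd (snd z)) else 0))
        - (\<Sum>z\<in>UNIV. pmf (sample_pmf p b P) z) * (visit_prob s a * (be * (qA k xs s a - qB k xs s a)))"
    unfolding noise_B_def by (simp add: right_diff_distrib sum_subtractf sum_distrib_right)
  also have "(\<Sum>z\<in>UNIV. pmf (sample_pmf p b P) z * (if fst z = s \<and> fst (snd z) = a then ?obs (snd (snd z)) else 0))
      = visit_prob s a * (be * (qA k xs s a - qB k xs s a))"
    using sum_sample_pmf_visit[where p=p and b=b and P=P and s=s and a=a and f="?obs"]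
    by (simp add: visit_prob_def sum_distrib_right[symmetric] sum_pmf_eq_1)
  finally show ?thesis by (simp add: sum_pmf_eq_1)
qed


lemma reward_bound: "\<bar>r s a s'\<bar> \<le> reward_bound"
  unfolding reward_bound_def by (rule Max_ge) (auto intro: image_eqI[of _ _ "(s, a, s')"])

lemma visit_prob_le_1: "visit_prob s a \<le> 1"
  unfolding visit_prob_def using pmf_le_1[of p s] pmf_le_1[of "b s" a] by (intro mult_le_one) auto

lemma bellman_op_abs_le:
  assumes "\<And>s' a'. \<bar>Q s' a'\<bar> \<le> B"
  shows "\<bar>bellman_op P r g Q s a\<bar> \<le> reward_bound + g * B"
proof -
  have "\<bar>bellman_op P r g (\<lambda>_ _. 0) s a\<bar> \<le> (\<Sum>s'\<in>UNIV. pmf (P s a) s' * reward_bound)"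
    unfolding bellman_op_def using reward_bound
    by (intro order.trans[OF sum_abs] sum_mono) (simp add: abs_mult mult_left_mono)
  also have "\<dots> = reward_bound" by (simp add: sum_distrib_right[symmetric] sum_pmf_eq_1)
  finally show ?thesis
    using bellman_op_contraction[OF g_nonneg, of Q "\<lambda>_ _. 0" B P r s a] assms by simp
qed

text \<open>Once \<open>al k * be \<le> 1\<close> both updates are convex combinations, so a box that contains the
  Bellman targets is invariant.\<close>

lemma agt2_step_abs_le:
  fixes QA QB :: "'s \<Rightarrow> 'a \<Rightarrow> real"
  assumes QA: "\<And>t c. \<bar>QA t c\<bar> \<le> B" and QB: "\<And>t c. \<bar>QB t c\<bar> \<le> B"
    and "0 \<le> \<alpha>" "\<alpha> \<le> 1" "\<alpha> * be \<le> 1"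
  shows "\<bar>fst (agt2_step r g be \<alpha> (QA, QB) x) t c\<bar> \<le> max B (reward_bound / (1 - g))
    \<and> \<bar>snd (agt2_step r g be \<alpha> (QA, QB) x) t c\<bar> \<le> max B (reward_bound / (1 - g))"
proof -
  obtain s0 a0 s0' where x: "x = (s0, a0, s0')" by (cases x)
  define M where "M = max B (reward_bound / (1 - g))"
  have "B \<le> M" by (simp add: M_def)
  have "reward_bound / (1 - g) \<le> M" by (simp add: M_def)
  then have "reward_bound \<le> (1 - g) * M"
    using g_less_1 by (simp add: pos_divide_le_eq mult.commute)
  moreover have "\<bar>MAX a'\<in>UNIV. QB s0' a'\<bar> \<le> B" by (rule abs_Max_le) (rule QB)
  then have "\<bar>g * (MAX a'\<in>UNIV. QB s0' a')\<bar> \<le> g * M"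
    using \<open>B \<le> M\<close> g_nonneg by (simp add: abs_mult mult_left_mono)
  ultimately have target: "\<bar>r s0 a0 s0' + g * (MAX a'\<in>UNIV. QB s0' a')\<bar> \<le> M"
    using reward_bound[of s0 a0 s0'] by (simp add: algebra_simps abs_le_iff)
  show ?thesis
  proof (cases "t = s0 \<and> c = a0")
    case True
    then have "fst (agt2_step r g be \<alpha> (QA, QB) x) t c
        = (1 - \<alpha>) * QA s0 a0 + \<alpha> * (r s0 a0 s0' + g * (MAX a'\<in>UNIV. QB s0' a'))"
      "snd (agt2_step r g be \<alpha> (QA, QB) x) t c = (1 - \<alpha> * be) * QB s0 a0 + (\<alpha> * be) * QA s0 a0"
      by (simp_all add: x agt2_step_def algebra_simps)
    moreover have "\<bar>QA s0 a0\<bar> \<le> M" "\<bar>QB s0 a0\<bar> \<le> M" using QA QB \<open>B \<le> M\<close> order_trans by blast+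
    ultimately show ?thesis
      using target assms(3-5) be_pos unfolding M_def[symmetric]
      by (simp add: abs_convex_comb_bounded)
  next
    case False
    then show ?thesis using QA[of t c] QB[of t c] \<open>B \<le> M\<close> by (auto simp: x agt2_step_def M_def)
  qed
qed

lemma iterates_bounded:
  assumes small: "\<And>k. K \<le> k \<Longrightarrow> al k * be \<le> 1"
  obtains C where "\<And>k xs s a. \<bar>qA k xs s a\<bar> \<le> C \<and> \<bar>qB k xs s a\<bar> \<le> C"
proof -
  \<comment> \<open>up to time \<open>K\<close> the iterates take finitely many values, afterwards a box is invariant\<close>
  define nrm where "nrm k xs = max (sup_dist (qA k xs) (\<lambda>_ _. 0)) (sup_dist (qB k xs) (\<lambda>_ _. 0))" for k xs
  have q_le_nrm: "\<bar>qA k xs s a\<bar> \<le> nrm k xs \<and> \<bar>qB k xs s a\<bar> \<le> nrm k xs" for k xs s a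
    using sup_dist_ge[of "qA k xs" s a "\<lambda>_ _. 0"] sup_dist_ge[of "qB k xs" s a "\<lambda>_ _. 0"]
    by (simp add: nrm_def le_max_iff_disj)
  have "\<exists>B. \<forall>xs. \<bar>nrm k xs\<bar> \<le> B" for k
    unfolding nrm_def
    by (rule prefix_determined_bounded[OF q_determined[where h="\<lambda>A B. max (sup_dist A (\<lambda>_ _. 0)) (sup_dist B (\<lambda>_ _. 0))"]])
  then obtain Bk where Bk: "\<And>k xs. nrm k xs \<le> Bk k" by (metis abs_le_D1)
  have step: "nrm (Suc k) xs \<le> max (nrm k xs) (reward_bound / (1 - g))" if "K \<le> k" for k xs
  proof -
    have "\<bar>qA (Suc k) xs s a\<bar> \<le> max (nrm k xs) (reward_bound / (1 - g))
        \<and> \<bar>qB (Suc k) xs s a\<bar> \<le> max (nrm k xs) (reward_bound / (1 - g))" for s a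
      unfolding qA_Suc_eq qB_Suc_eq using q_le_nrm al_nonneg al_le_1 small[OF that]
      by (intro agt2_step_abs_le) auto
    then show ?thesis unfolding nrm_def[of "Suc k"] by (auto intro!: sup_dist_le)
  qed
  have tail: "nrm (K + i) xs \<le> max (nrm K xs) (reward_bound / (1 - g))" for i xs
  proof (induction i)
    case (Suc i)
    then show ?case using step[of "K + i" xs] by simp
  qed simp
  define C where "C = max (Max (Bk ` {..K})) (reward_bound / (1 - g))"
  have Bk_le: "Bk k \<le> C" if "k \<le> K" for k
    using that Max_ge[of "Bk ` {..K}" "Bk k"] by (simp add: C_def le_max_iff_disj)
  have nrm_le: "nrm k xs \<le> C" for k xs
  proof (cases "k \<le> K")
    case True
    then show ?thesis using Bk[of k xs] Bk_le by (meson order_trans)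
  next
    case False
    then have "nrm k xs \<le> max (nrm K xs) (reward_bound / (1 - g))" using tail[of "k - K" xs] by simp
    also have "\<dots> \<le> C" using Bk[of K xs] Bk_le[of K] by (simp add: C_def)
    finally show ?thesis .
  qed
  show ?thesis
  proof (rule that)
    fix k xs s a show "\<bar>qA k xs s a\<bar> \<le> C \<and> \<bar>qB k xs s a\<bar> \<le> C"
      using q_le_nrm[of k xs s a] nrm_le[of k xs] by linarith
  qed
qed

context
  fixes C :: real
  assumes q_bounded: "\<And>k xs s a. \<bar>qA k xs s a\<bar> \<le> C \<and> \<bar>qB k xs s a\<bar> \<le> C"
begin

lemma noise_A_bounded: "\<bar>noise_A s a k xs z\<bar> \<le> 2 * (reward_bound + 2 * C)"
proof -
  have "0 \<le> C" using q_bounded[of 0 undefined undefined undefined] by linarith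
  have g_max: "\<bar>g * (MAX a'\<in>UNIV. qB k xs s' a')\<bar> \<le> 1 * C" for s'
  proof -
    have "\<bar>MAX a'\<in>UNIV. qB k xs s' a'\<bar> \<le> C" by (rule abs_Max_le) (use q_bounded in blast)
    then show ?thesis unfolding abs_mult using g_nonneg g_less_1 by (intro mult_mono) auto
  qed
  have "\<bar>if fst z = s \<and> fst (snd z) = a
      then r s a (snd (snd z)) + g * (MAX a'\<in>UNIV. qB k xs (snd (snd z)) a') - qA k xs s a else 0\<bar>
      \<le> reward_bound + 2 * C"
    using reward_bound[of s a "snd (snd z)"] g_max[of "snd (snd z)"] q_bounded[of k xs s a] \<open>0 \<le> C\<close>
    by (auto simp: abs_le_iff)
  moreover have "\<bar>visit_prob s a * (bellman_op P r g (qB k xs) s a - qA k xs s a)\<bar> \<le> 1 * (reward_bound + 2 * C)"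
  proof (unfold abs_mult, rule mult_mono)
    have "g * C \<le> C" using g_less_1 \<open>0 \<le> C\<close> by (simp add: mult_left_le_one_le g_nonneg)
    moreover have "\<bar>bellman_op P r g (qB k xs) s a\<bar> \<le> reward_bound + g * C"
      by (rule bellman_op_abs_le) (use q_bounded in blast)
    moreover have "\<bar>qA k xs s a\<bar> \<le> C" using q_bounded by blast
    ultimately show "\<bar>bellman_op P r g (qB k xs) s a - qA k xs s a\<bar> \<le> reward_bound + 2 * C"
      by (auto simp: abs_le_iff)
  qed (use visit_prob_le_1 in \<open>auto simp: visit_prob_def\<close>)
  ultimately show ?thesis unfolding noise_A_def by (simp add: abs_le_iff)
qed

lemma noise_B_bounded: "\<bar>noise_B s a k xs z\<bar> \<le> 4 * be * C"
proof -
  have "\<bar>be * (qA k xs s a - qB k xs s a)\<bar> \<le> be * (2 * C)"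
    using q_bounded[of k xs s a] be_pos by (simp add: abs_mult abs_le_iff mult_left_mono)
  moreover have "\<bar>visit_prob s a * (be * (qA k xs s a - qB k xs s a))\<bar> \<le> \<bar>be * (qA k xs s a - qB k xs s a)\<bar>"
    using visit_prob_le_1[of s a] by (simp add: abs_mult mult_left_le_one_le visit_prob_def)
  moreover have "0 \<le> C" using q_bounded[of 0 undefined undefined undefined] by linarith
  ultimately have "\<bar>if fst z = s \<and> fst (snd z) = a then be * (qA k xs s a - qB k xs s a) else 0\<bar>
      + \<bar>visit_prob s a * (be * (qA k xs s a - qB k xs s a))\<bar> \<le> 4 * be * C"
    using be_pos by auto
  then show ?thesis unfolding noise_B_def by (rule order.trans[OF abs_triangle_ineq4])
qed

end

lemma LIMSEQ_if_noise_convergent: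
  assumes "bellman_opt P r g Qstar" and "\<And>s a. 0 < visit_prob s a"
    and "\<not> summable al" and "summable (\<lambda>k. (al k)\<^sup>2)"
    and "\<And>s a. convergent (\<lambda>n. \<Sum>k<n. al k * noise_A s a k xs (xs k))"
    and "\<And>s a. convergent (\<lambda>n. \<Sum>k<n. al k * noise_B s a k xs (xs k))"
  shows "(\<lambda>k. qA k xs s a) \<longlonglongrightarrow> Qstar s a \<and> (\<lambda>k. qB k xs s a) \<longlonglongrightarrow> Qstar s a"
proof -
  obtain K where "\<And>k. K \<le> k \<Longrightarrow> al k * be \<le> 1"
    using square_summable_eventually_le[OF assms(4) be_pos] by blast
  then have "al k \<le> 1 \<and> al k * be \<le> 1" if "K \<le> k" for k using al_le_1 that by blast
  then show ?thesis
    by (rule noisy_coupled_iteration_LIMSEQ[where QA="\<lambda>k. qA k xs" and QB="\<lambda>k. qB k xs"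
        and wA="\<lambda>k s a. noise_A s a k xs (xs k)" and wB="\<lambda>k s a. noise_B s a k xs (xs k)",
        OF g_nonneg g_less_1 be_pos assms(2) visit_prob_le_1 al_nonneg _ assms(3)
        bellman_op_contraction[OF g_nonneg] bellman_op_fixpoint[OF assms(1)] qA_Suc qB_Suc assms(5,6)])
qed

lemma AE_noise_convergent:
  assumes "iid_sequence M X (sample_pmf p b P)" and "summable (\<lambda>k. (al k)\<^sup>2)"
  shows "AE \<omega> in M. \<forall>s a. convergent (\<lambda>n. \<Sum>k<n. al k * noise_A s a k (\<lambda>j. X j \<omega>) (X k \<omega>))
    \<and> convergent (\<lambda>n. \<Sum>k<n. al k * noise_B s a k (\<lambda>j. X j \<omega>) (X k \<omega>))"
proof -
  interpret iid_sequence M X "sample_pmf p b P" by fact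
  obtain K where K: "\<And>k. K \<le> k \<Longrightarrow> al k * be \<le> 1"
    using square_summable_eventually_le[OF assms(2) be_pos] by blast
  obtain C where C: "\<And>k xs s a. \<bar>qA k xs s a\<bar> \<le> C \<and> \<bar>qB k xs s a\<bar> \<le> C"
    using iterates_bounded[OF K] by blast
  have "AE \<omega> in M. convergent (\<lambda>n. \<Sum>k<n. al k * noise_A s a k (path \<omega>) (X k \<omega>))"
    "AE \<omega> in M. convergent (\<lambda>n. \<Sum>k<n. al k * noise_B s a k (path \<omega>) (X k \<omega>))" for s a
    by (rule AE_convergent_martingale_difference_sum[where phi="\<lambda>k xs z. noise_A s a k xs z",
          OF noise_A_determined noise_A_bounded[OF C] noise_A_mean_zero assms(2)],
        rule AE_convergent_martingale_difference_sum[where phi="\<lambda>k xs z. noise_B s a k xs z",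
          OF noise_B_determined noise_B_bounded[OF C] noise_B_mean_zero assms(2)])
  then show ?thesis by (simp add: AE_all_countable path_def)
qed

end

theorem theorem3:
  fixes P :: "'s::finite \<Rightarrow> 'a::finite \<Rightarrow> 's pmf"
    and r :: "'s \<Rightarrow> 'a \<Rightarrow> 's \<Rightarrow> real"
    and g be :: real
    and Qstar QA0 QB0 :: "'s \<Rightarrow> 'a \<Rightarrow> real"
    and p :: "'s pmf" and b :: "'s \<Rightarrow> 'a pmf"
    and al :: "nat \<Rightarrow> real"
    and M :: "'m measure"
    and X :: "nat \<Rightarrow> 'm \<Rightarrow> 's \<times> 'a \<times> 's"
  assumes "0 \<le> g" "g < 1"
    and "bellman_opt P r g Qstar"
    and "be > 0"
    and "\<And>s a. pmf p s * pmf (b s) a > 0"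
    and "prob_space M"
    and "\<And>k. X k \<in> measurable M (count_space UNIV)"
    and "prob_space.indep_vars M (\<lambda>_. count_space UNIV) X UNIV"
    and "\<And>k. distr M (count_space UNIV) (X k) = measure_pmf (sample_pmf p b P)"
    and "\<And>k. 0 \<le> al k" "\<And>k. al k \<le> 1"
    and "\<not> summable al"
    and "summable (\<lambda>k. (al k)\<^sup>2)"
  shows "AE \<omega> in M. \<forall>s a.
           (\<lambda>k. fst (agt2_iter r g be al QA0 QB0 (\<lambda>j. X j \<omega>) k) s a) \<longlonglongrightarrow> Qstar s a \<and>
           (\<lambda>k. snd (agt2_iter r g be al QA0 QB0 (\<lambda>j. X j \<omega>) k) s a) \<longlonglongrightarrow> Qstar s a"
proof -
  interpret agt2_ql P r g be al QA0 QB0 p b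
    using assms(1,2,4,10,11) by unfold_locales
  have "iid_sequence M X (sample_pmf p b P)"
    using assms(6-9) by (intro iid_sequence.intro iid_sequence_axioms.intro)
  from AE_noise_convergent[OF this assms(13)] show ?thesis
  proof eventually_elim
    case (elim \<omega>)
    have "0 < visit_prob s a" for s a using assms(5) by (simp add: visit_prob_def)
    with elim show ?case
      using LIMSEQ_if_noise_convergent[where xs="\<lambda>j. X j \<omega>", OF assms(3) _ assms(12,13)]
      by (simp add: qA_def qB_def)
  qed
qed

end
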